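(* Let $F=A^\sharp\circ B\circ P$, where $A\in\mathbb{T}^{m\times n}$ has at least one finite entry per column, $B\in\mathbb{T}^{m\times q}$ has at least one finite entry per row, the finite entries of $A,B$ are integers, and $P\in\mathbb{R}^{q\times n}$ is row-stochastic with $P_{il}=Q_{il}/M$ for integers $Q_{il}$ and a positive integer $M$. Suppose $F$ has a bias vector, and let $v^\ast$ be its Blackwell bias. Then \[ R(F)\le\|v^\ast\|_H\le 10\,n^2\,W\,M^{\min\{k,n-1\}}, \] where $k$ is the number of nondeterministic states.
   Context: $\mathbb{T}=\mathbb{R}\cup\{-\infty\}$; $\mathbb{0}=-\infty$. For $C\in\mathbb{T}^{r\times s}$: $(C\odot z)_i=\max_j(C_{ij}+z_j)$; $C^\sharp(y)_j=\min_i(-C_{ij}+y_i)$ with $(+\infty)+(-\infty)=+\infty$; $Pz$ is the usual product with $0\cdot(-\infty)=0$; so $F(x)=A^\sharp(B\odot(Px))$ maps $\mathbb{R}^n$ to $\mathbb{R}^n$. $W=\max\{|A_{ij}-B_{ih}|: A_{ij}\ne-\infty,\ B_{ih}\ne-\infty,\ i\in[m],\ j\in[n],\ h\in[q]\}$. A state $i\in[q]$ is nondeterministic if $P_{il}>0$ and $P_{il'}>0$ for some $l\ne l'$. $\|x\|_H=\max_i x_i-\min_i x_i$. A bias vector is $v\in\mathbb{R}^n$ with $F(v)=\lambda+v$ for some $\lambda\in\mathbb{R}$; $\lambda=\rho(F)$ is unique (ergodic constant). $R(F)=\inf\{\|u\|_H: u\in\mathbb{R}^n,\ F(u)=\rho(F)+u\}$.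 For $0<\alpha<1$, $v_\alpha\in\mathbb{R}^n$ denotes the unique solution of $v_\alpha=F(\alpha v_\alpha)$ (value of the discounted game); the limit $v^\ast=\lim_{\alpha\to1^-}\bigl(v_\alpha-\rho(F)/(1-\alpha)\bigr)$ exists and is a bias vector, called the Blackwell bias. *)

theory Defs
  imports "HOL-Analysis.Analysis"
begin

text \<open>Tropical numbers are represented in ereal; entries of tropical matrices are
  required (by hypothesis) to differ from PInfty. Vectors in R^n are real^'n.\<close>

definition trop_mul :: "ereal^'q^'m \<Rightarrow> real^'q \<Rightarrow> ereal^'m" where
  "trop_mul C z = (\<chi> i. Max (range (\<lambda>h. C$i$h + ereal (z$h))))"

text \<open>C^sharp(y)_j = min_i (-C_ij + y_i); ereal addition satisfies
  PInfty + MInfty = PInfty, matching the convention.\<close>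
definition trop_sharp :: "ereal^'n^'m \<Rightarrow> ereal^'m \<Rightarrow> ereal^'n" where
  "trop_sharp C y = (\<chi> j. Min (range (\<lambda>i. - C$i$j + y$i)))"

definition shapley :: "ereal^'n^'m \<Rightarrow> ereal^'q^'m \<Rightarrow> real^'n^'q \<Rightarrow> real^'n \<Rightarrow> real^'n" where
  "shapley A B P x = (\<chi> j. real_of_ereal (trop_sharp A (trop_mul B (P *v x)) $ j))"

definition hnorm :: "real^'n \<Rightarrow> real" where
  "hnorm x = Max (range (\<lambda>i. x$i)) - Min (range (\<lambda>i. x$i))"

definition is_bias :: "(real^'n \<Rightarrow> real^'n) \<Rightarrow> real^'n \<Rightarrow> bool" where
  "is_bias F v \<longleftrightarrow> (\<exists>c::real. F v = (\<chi> i. c + v$i))"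

definition ergodic_const :: "(real^'n \<Rightarrow> real^'n) \<Rightarrow> real" where
  "ergodic_const F = (THE c. \<exists>v. F v = (\<chi> i. c + v$i))"

definition R_F :: "(real^'n \<Rightarrow> real^'n) \<Rightarrow> real" where
  "R_F F = Inf (hnorm ` {u. F u = (\<chi> i. ergodic_const F + u$i)})"

definition disc_value :: "(real^'n \<Rightarrow> real^'n) \<Rightarrow> real \<Rightarrow> real^'n" where
  "disc_value F \<alpha> = (THE v. v = F (\<alpha> *\<^sub>R v))"

definition blackwell_bias :: "(real^'n \<Rightarrow> real^'n) \<Rightarrow> real^'n" where
  "blackwell_bias F = Lim (at_left 1)
     (\<lambda>\<alpha>. disc_value F \<alpha> - (\<chi> i. ergodic_const F / (1 - \<alpha>)))"

definition W_param :: "ereal^'n^'m \<Rightarrow> ereal^'q^'m \<Rightarrow> real" where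
  "W_param A B = Max {\<bar>real_of_ereal (A$i$j) - real_of_ereal (B$i$h)\<bar> | i j h.
                        A$i$j \<noteq> -\<infinity> \<and> B$i$h \<noteq> -\<infinity>}"

definition nondet_states :: "real^'n^'q \<Rightarrow> 'q set" where
  "nondet_states P = {i. \<exists>l l'. l \<noteq> l' \<and> P$i$l > 0 \<and> P$i$l' > 0}"

end

theory Submission
  imports Defs "HOL-Computational_Algebra.Polynomial"
begin

text \<open>
  The discounted value \<open>v\<^sub>\<alpha>\<close> is always the value of one of finitely many pairs of positional
  strategies, and each such value is a rational function of \<open>\<alpha>\<close>; hence a single pair is optimal
  for all \<open>\<alpha>\<close> close to \<open>1\<close> (Blackwell optimality). So \<open>v\<^sub>\<alpha> - \<rho>/(1 - \<alpha>)\<close> is a bounded rational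
  function of \<open>\<alpha>\<close>, and its limit \<open>v\<^sup>*\<close> is a bias vector satisfying \<open>v\<^sup>* = c - \<rho> + T v\<^sup>*\<close>, where
  the rows of the stochastic matrix \<open>T\<close> are rows of \<open>P\<close> and \<open>\<bar>c - \<rho>\<bar> \<le> 2 W\<close>. A maximum principle for
  the discounted equations shows that \<open>v\<^sup>*\<close> takes both signs on every closed class of \<open>T\<close>. Along a
  shortest path from a state into a closed class every row of \<open>P\<close> occurs at most once, and its
  positive entries are \<open>1\<close> for deterministic states and at least \<open>1/M\<close> otherwise; so the path has
  probability at least \<open>M\<^sup>-\<^sup>K\<close> with \<open>K = min k (n - 1)\<close>, which gives
  \<open>\<parallel>v\<^sup>*\<parallel>\<^sub>H \<le> 8 (n - 1) W M\<^sup>K\<close>.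
\<close>

lemma infnorm_le_cart:
  fixes x :: "real^'n"
  assumes "\<And>i. \<bar>x$i\<bar> \<le> c"
  shows "infnorm x \<le> c"
  unfolding infnorm_cart using assms by (auto intro!: cSup_least)

lemma infnorm_eq_0_cart:
  fixes x :: "real^'n"
  assumes "infnorm x \<le> 0"
  shows "x = 0"
  using assms infnorm_pos_le[of x] infnorm_eq_0[of x] by simp

lemma Max_image_mono:
  assumes "finite S" "S \<noteq> {}" "\<And>s. s \<in> S \<Longrightarrow> f s \<le> (g s :: 'a::linorder)"
  shows "Max (f ` S) \<le> Max (g ` S)"
  using assms by (subst Max_le_iff) (auto intro: order_trans[OF _ Max_ge])

lemma Min_image_mono:
  assumes "finite S" "S \<noteq> {}" "\<And>s. s \<in> S \<Longrightarrow> f s \<le> (g s :: 'a::linorder)"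
  shows "Min (f ` S) \<le> Min (g ` S)"
  using assms by (subst Min_ge_iff) (auto intro: order_trans[OF Min_le])

lemma Max_range_attained:
  fixes f :: "'a::finite \<Rightarrow> 'b::linorder"
  shows "\<exists>j. Max (range f) = f j"
  by (metis empty_not_UNIV finite_class.finite_UNIV obtains_MAX)

lemma Min_range_attained:
  fixes f :: "'a::finite \<Rightarrow> 'b::linorder"
  shows "\<exists>j. Min (range f) = f j"
  by (metis empty_not_UNIV finite_class.finite_UNIV obtains_MIN)

lemma hnorm_nonneg: "hnorm (x :: real^'n) \<ge> 0"
proof -
  have "Min (range (\<lambda>i. x$i)) \<le> x$i" "x$i \<le> Max (range (\<lambda>i. x$i))" for i by auto
  then show ?thesis unfolding hnorm_def by (meson diff_ge_0_iff_ge order_trans)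
qed

section \<open>Stochastic matrices\<close>

definition stochastic :: "real^'n^'k \<Rightarrow> bool" where
  "stochastic T \<longleftrightarrow> (\<forall>j l. T$j$l \<ge> 0) \<and> (\<forall>j. (\<Sum>l\<in>UNIV. T$j$l) = 1)"

context
  fixes T :: "real^'n::finite^'k"
  assumes T: "stochastic T"
begin

lemma stochastic_nonneg: "T$j$l \<ge> 0"
  using T unfolding stochastic_def by blast

lemma stochastic_entry_le_1: "T$j$l \<le> 1"
proof -
  have "T$j$l \<le> (\<Sum>l\<in>UNIV. T$j$l)" by (rule member_le_sum) (auto simp: stochastic_nonneg)
  then show ?thesis using T by (simp add: stochastic_def)
qed

lemma stochastic_mult_ge:
  assumes "\<And>l. T$j$l > 0 \<Longrightarrow> a \<le> v$l"
  shows "a \<le> (T *v v)$j"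
proof -
  have "T$j$l * a \<le> T$j$l * v$l" for l
    using assms[of l] stochastic_nonneg[of j l] by (cases "T$j$l > 0") (auto intro: mult_left_mono)
  then have "(\<Sum>l\<in>UNIV. T$j$l * a) \<le> (\<Sum>l\<in>UNIV. T$j$l * v$l)" by (rule sum_mono)
  then show ?thesis using T
    by (simp add: stochastic_def matrix_vector_mult_def sum_distrib_right[symmetric])
qed

lemma stochastic_mult_le:
  assumes "\<And>l. T$j$l > 0 \<Longrightarrow> v$l \<le> a"
  shows "(T *v v)$j \<le> a"
proof -
  have "- a \<le> (T *v (- v))$j" by (rule stochastic_mult_ge) (use assms in force)
  then show ?thesis by (simp add: matrix_vector_mult_def sum_negf)
qed

lemma stochastic_mult_mono:
  assumes "\<And>l. v$l \<le> u$l"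
  shows "(T *v v)$j \<le> (T *v u)$j"
proof -
  have "0 \<le> (T *v (u - v))$j" by (rule stochastic_mult_ge) (use assms in simp)
  then show ?thesis by (simp add: matrix_vector_mult_diff_distrib)
qed

lemma stochastic_mult_const: "(T *v (\<chi> i. t))$j = t"
  using T by (simp add: stochastic_def matrix_vector_mult_def sum_distrib_right[symmetric])

lemma stochastic_mult_add_const: "(T *v (\<chi> i. v$i + t))$j = (T *v v)$j + t"
proof -
  have "(\<chi> i. v$i + t) = v + (\<chi> i. t)" by (simp add: vec_eq_iff)
  then show ?thesis by (simp add: matrix_vector_right_distrib stochastic_mult_const)
qed

lemma stochastic_mult_infnorm: "\<bar>(T *v v)$j\<bar> \<le> infnorm v"
proof -
  have "- infnorm v \<le> v$l" "v$l \<le> infnorm v" for l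
    using component_le_infnorm_cart[of v l] by (auto simp: abs_le_iff)
  then show ?thesis
    using stochastic_mult_le[of j v "infnorm v"] stochastic_mult_ge[of j "- infnorm v" v]
    by (simp add: abs_le_iff)
qed

lemma stochastic_infnorm_mult: "infnorm (T *v v) \<le> infnorm v"
  by (rule infnorm_le_cart) (rule stochastic_mult_infnorm)

end

definition absorbing :: "real^'n^'n \<Rightarrow> 'n set \<Rightarrow> bool" where
  "absorbing T C \<longleftrightarrow> (\<forall>j\<in>C. \<forall>l. T$j$l > 0 \<longrightarrow> l \<in> C)"

lemma discounted_max_principle:
  fixes T :: "real^'n::finite^'n"
  assumes T: "stochastic T" and C: "absorbing T C" "C \<noteq> {}" and \<alpha>: "0 \<le> \<alpha>" "\<alpha> < 1"
    and e: "\<And>j. e$j = \<alpha> * (T *v e)$j - (1 - \<alpha>) * (T *v v)$j"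
    and v: "\<And>j. j \<in> C \<Longrightarrow> \<epsilon> \<le> v$j"
    and j: "j \<in> C"
  shows "e$j \<le> - \<epsilon>"
proof -
  let ?\<mu> = "Max ((\<lambda>j. e$j) ` C)"
  have "?\<mu> \<in> (\<lambda>j. e$j) ` C" by (rule Max_in) (use C(2) in auto)
  then obtain j1 where j1: "j1 \<in> C" "?\<mu> = e$j1" by auto
  have le: "e$l \<le> ?\<mu>" if "l \<in> C" for l using that by simp
  have "(T *v e)$j1 \<le> ?\<mu>" "\<epsilon> \<le> (T *v v)$j1"
    using C(1) j1(1) le v unfolding absorbing_def
    by (auto intro!: stochastic_mult_le[OF T] stochastic_mult_ge[OF T])
  then have "?\<mu> \<le> \<alpha> * ?\<mu> - (1 - \<alpha>) * \<epsilon>"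
    using e[of j1] j1(2) \<alpha> mult_left_mono[of "(T *v e)$j1" ?\<mu> \<alpha>]
      mult_left_mono[of \<epsilon> "(T *v v)$j1" "1 - \<alpha>"] by linarith
  then have "(1 - \<alpha>) * (?\<mu> + \<epsilon>) \<le> 0" by (simp add: algebra_simps)
  then have "?\<mu> \<le> - \<epsilon>" using \<alpha> by (simp add: mult_le_0_iff)
  then show ?thesis using le[OF j] by simp
qed

section \<open>The minimax operator of a stochastic game\<close>

text \<open>In state \<open>j\<close> player Min chooses \<open>i \<in> Is j\<close>, then player Max chooses \<open>h \<in> Hs i\<close> and receives
  \<open>c i j h\<close>; the next state is drawn from row \<open>h\<close> of \<open>P\<close>.\<close>
definition minmax_op ::
    "('n \<Rightarrow> 'm set) \<Rightarrow> ('m \<Rightarrow> 'q set) \<Rightarrow> ('m \<Rightarrow> 'n \<Rightarrow> 'q \<Rightarrow> real) \<Rightarrow> real^'n^'q \<Rightarrow> real^'n \<Rightarrow> real^'n"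
  where "minmax_op Is Hs c P x = (\<chi> j. Min ((\<lambda>i. Max ((\<lambda>h. c i j h + (P *v x)$h) ` Hs i)) ` Is j))"

locale shapley_game =
  fixes Is :: "'n::finite \<Rightarrow> 'm::finite set" and Hs :: "'m \<Rightarrow> 'q::finite set"
    and c :: "'m \<Rightarrow> 'n \<Rightarrow> 'q \<Rightarrow> real" and P :: "real^'n^'q" and W :: real
  assumes Is_nonempty: "Is j \<noteq> {}" and Hs_nonempty: "Hs i \<noteq> {}"
    and P_stochastic: "stochastic P"
    and payoff_bound: "i \<in> Is j \<Longrightarrow> h \<in> Hs i \<Longrightarrow> \<bar>c i j h\<bar> \<le> W"
begin

abbreviation F :: "real^'n \<Rightarrow> real^'n" where
  "F \<equiv> minmax_op Is Hs c P"

lemma F_mono: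
  assumes "\<And>i. x$i \<le> y$i"
  shows "F x $ j \<le> F y $ j"
proof -
  have "Max ((\<lambda>h. c i j h + (P *v x)$h) ` Hs i) \<le> Max ((\<lambda>h. c i j h + (P *v y)$h) ` Hs i)" for i
    using stochastic_mult_mono[OF P_stochastic assms]
    by (intro Max_image_mono) (auto simp: Hs_nonempty)
  then show ?thesis
    unfolding minmax_op_def by simp (rule Min_image_mono, auto simp: Is_nonempty)
qed

lemma F_add_const: "F (\<chi> i. x$i + t) $ j = F x $ j + t"
proof -
  have "F (\<chi> i. x$i + t) $ j = Min ((\<lambda>i. Max ((\<lambda>h. (c i j h + (P *v x)$h) + t) ` Hs i)) ` Is j)"
    unfolding minmax_op_def by (simp add: stochastic_mult_add_const[OF P_stochastic] add.assoc)
  also have "\<dots> = Min ((\<lambda>i. Max ((\<lambda>h. c i j h + (P *v x)$h) ` Hs i) + t) ` Is j)"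
    using Hs_nonempty by (subst Max_add_commute) auto
  also have "\<dots> = F x $ j + t"
    unfolding minmax_op_def using Is_nonempty by (subst Min_add_commute) auto
  finally show ?thesis .
qed

text \<open>Monotonicity and additive homogeneity make \<open>F\<close> sup-norm nonexpansive.\<close>
lemma F_nonexpansive: "infnorm (F x - F y) \<le> infnorm (x - y)"
proof (rule infnorm_le_cart)
  fix j
  let ?s = "infnorm (x - y)"
  have "x$i \<le> y$i + ?s" "y$i \<le> x$i + ?s" for i
    using component_le_infnorm_cart[of "x - y" i] by (auto simp: abs_le_iff)
  then have "F x $ j \<le> F (\<chi> i. y$i + ?s) $ j" "F y $ j \<le> F (\<chi> i. x$i + ?s) $ j"
    by (auto intro!: F_mono)
  then show "\<bar>(F x - F y) $ j\<bar> \<le> ?s" by (simp add: F_add_const abs_le_iff)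
qed

lemma F_continuous: "continuous_on UNIV F"
proof (rule lipschitz_on_continuous_on)
  show "lipschitz_on (sqrt CARD('n)) UNIV F"
  proof (rule lipschitz_onI)
    fix x y :: "real^'n"
    have "dist (F x) (F y) \<le> sqrt (CARD('n)) * infnorm (F x - F y)"
      unfolding dist_norm using norm_le_infnorm[of "F x - F y"] by simp
    also have "\<dots> \<le> sqrt (CARD('n)) * dist x y"
      using F_nonexpansive[of x y] infnorm_le_norm[of "x - y"]
      by (intro mult_left_mono) (auto simp: dist_norm)
    finally show "dist (F x) (F y) \<le> sqrt (CARD('n)) * dist x y" .
  qed simp
qed

lemma F_le_Max: "F x $ j \<le> W + Max (range (\<lambda>l. x$l))"
proof -
  obtain i where i: "i \<in> Is j" using Is_nonempty by blast
  have "F x $ j \<le> Max ((\<lambda>h. c i j h + (P *v x)$h) ` Hs i)"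
    unfolding minmax_op_def using i by simp
  also have "\<dots> \<le> W + Max (range (\<lambda>l. x$l))"
    using Hs_nonempty[of i] payoff_bound[OF i] stochastic_mult_le[OF P_stochastic, of _ x]
    by (subst Max_le_iff) (auto simp: abs_le_iff intro: add_mono)
  finally show ?thesis .
qed

lemma F_ge_Min: "- W + Min (range (\<lambda>l. x$l)) \<le> F x $ j"
proof -
  have "- W + Min (range (\<lambda>l. x$l)) \<le> Max ((\<lambda>h. c i j h + (P *v x)$h) ` Hs i)"
    if i: "i \<in> Is j" for i
  proof -
    obtain h where h: "h \<in> Hs i" using Hs_nonempty by blast
    have "Min (range (\<lambda>l. x$l)) \<le> (P *v x)$h" by (rule stochastic_mult_ge[OF P_stochastic]) simp
    then have "- W + Min (range (\<lambda>l. x$l)) \<le> c i j h + (P *v x)$h"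
      using payoff_bound[OF i h] by (simp add: abs_le_iff)
    also have "\<dots> \<le> Max ((\<lambda>h. c i j h + (P *v x)$h) ` Hs i)" using h by auto
    finally show ?thesis .
  qed
  then show ?thesis unfolding minmax_op_def vec_lambda_beta using Is_nonempty[of j] by (subst Min_ge_iff) auto
qed

lemma discounted_contraction:
  assumes "0 \<le> \<alpha>"
  shows "infnorm (F (\<alpha> *\<^sub>R x) - F (\<alpha> *\<^sub>R y)) \<le> \<alpha> * infnorm (x - y)"
  using F_nonexpansive[of "\<alpha> *\<^sub>R x" "\<alpha> *\<^sub>R y"] assms
  by (simp add: infnorm_mul scaleR_diff_right[symmetric])

lemma discounted_fixpoint_unique:
  assumes "0 \<le> \<alpha>" "\<alpha> < 1" "x = F (\<alpha> *\<^sub>R x)" "y = F (\<alpha> *\<^sub>R y)"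
  shows "x = y"
proof -
  have "infnorm (x - y) \<le> \<alpha> * infnorm (x - y)"
    using discounted_contraction[OF assms(1), of x y] assms(3,4) by simp
  then have "(1 - \<alpha>) * infnorm (x - y) \<le> 0" by (simp add: algebra_simps)
  then have "infnorm (x - y) \<le> 0" using assms(2) by (simp add: mult_le_0_iff)
  then show ?thesis using infnorm_eq_0_cart[of "x - y"] by simp
qed

text \<open>Banach's theorem is applied to an iterate of \<open>x \<mapsto> F (\<alpha> x)\<close>, which is a contraction
  also for the Euclidean metric.\<close>
lemma discounted_fixpoint_exists:
  assumes "0 \<le> \<alpha>" "\<alpha> < 1"
  shows "\<exists>x. x = F (\<alpha> *\<^sub>R x)"
proof -
  let ?G = "\<lambda>x. F (\<alpha> *\<^sub>R x)"
  let ?C = "sqrt CARD('n)"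
  have iterate: "infnorm ((?G ^^ N) x - (?G ^^ N) y) \<le> \<alpha>^N * infnorm (x - y)" for N x y
  proof (induction N)
    case (Suc N)
    have "infnorm ((?G ^^ Suc N) x - (?G ^^ Suc N) y) \<le> \<alpha> * infnorm ((?G ^^ N) x - (?G ^^ N) y)"
      using discounted_contraction[OF assms(1)] by simp
    also have "\<dots> \<le> \<alpha>^Suc N * infnorm (x - y)" using Suc assms(1) by (simp add: mult_left_mono mult.assoc)
    finally show ?case .
  qed simp
  obtain N where N: "\<alpha>^N < 1 / ?C" using real_arch_pow_inv[of "1 / ?C" \<alpha>] assms by auto
  have C: "?C \<ge> 1" by simp
  have "dist ((?G ^^ N) x) ((?G ^^ N) y) \<le> (?C * \<alpha>^N) * dist x y" for x y
  proof -
    have "dist ((?G ^^ N) x) ((?G ^^ N) y) \<le> ?C * infnorm ((?G ^^ N) x - (?G ^^ N) y)"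
      unfolding dist_norm using norm_le_infnorm[of "(?G ^^ N) x - (?G ^^ N) y"] by simp
    also have "\<dots> \<le> ?C * (\<alpha>^N * infnorm (x - y))" by (simp add: iterate mult_left_mono)
    also have "\<dots> \<le> ?C * (\<alpha>^N * dist x y)"
      using assms(1) by (simp add: dist_norm infnorm_le_norm mult_left_mono)
    finally show ?thesis by (simp add: mult.assoc)
  qed
  moreover have "?C * \<alpha>^N < 1" using N C by (simp add: field_simps)
  ultimately have "\<exists>!z. (?G ^^ N) z = z" using assms by (intro banach_fix_type) auto
  then obtain z where z: "(?G ^^ N) z = z" "\<And>z'. (?G ^^ N) z' = z' \<Longrightarrow> z' = z" by blast
  have "(?G ^^ N) (?G z) = ?G z" by (metis funpow_swap1 z(1))
  then show ?thesis using z by metis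
qed

lemma disc_value_fixpoint:
  assumes "0 \<le> \<alpha>" "\<alpha> < 1"
  shows "disc_value F \<alpha> = F (\<alpha> *\<^sub>R disc_value F \<alpha>)"
  unfolding disc_value_def
  by (rule theI') (use discounted_fixpoint_exists[OF assms] discounted_fixpoint_unique[OF assms] in blast)

lemma disc_value_eqI:
  assumes "0 \<le> \<alpha>" "\<alpha> < 1" "v = F (\<alpha> *\<^sub>R v)"
  shows "disc_value F \<alpha> = v"
  using discounted_fixpoint_unique[OF assms(1,2) disc_value_fixpoint[OF assms(1,2)] assms(3)] .

lemma bias_const_le:
  assumes "F v = (\<chi> i. \<rho> + v$i)" "F v' = (\<chi> i. \<rho>' + v'$i)"
  shows "\<rho> \<le> \<rho>'"
proof -
  let ?s = "Max (range (\<lambda>i. v$i - v'$i))"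
  obtain j where j: "?s = v$j - v'$j" using Max_range_attained by auto
  have "v$i - v'$i \<le> ?s" for i by (rule Max_ge) auto
  then have "v$i \<le> v'$i + ?s" for i by (simp add: algebra_simps)
  then have "F v $ j \<le> F (\<chi> i. v'$i + ?s) $ j" by (intro F_mono) simp
  then have "\<rho> + v$j \<le> \<rho>' + v'$j + ?s" using assms by (simp add: F_add_const)
  then show ?thesis using j by linarith
qed

lemma ergodic_const_eqI:
  assumes "F v = (\<chi> i. \<rho> + v$i)"
  shows "ergodic_const F = \<rho>"
  unfolding ergodic_const_def
proof (rule the_equality)
  fix \<rho>' assume "\<exists>v. F v = (\<chi> i. \<rho>' + v $ i)"
  then show "\<rho>' = \<rho>" using bias_const_le[OF assms] bias_const_le[OF _ assms] by (meson antisym)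
qed (use assms in blast)

lemma bias_const_bound:
  assumes "F v = (\<chi> i. \<rho> + v$i)"
  shows "\<bar>\<rho>\<bar> \<le> W"
proof -
  obtain j1 where j1: "Max (range (\<lambda>l. v$l)) = v$j1" using Max_range_attained by auto
  obtain j0 where j0: "Min (range (\<lambda>l. v$l)) = v$j0" using Min_range_attained by auto
  show ?thesis using F_le_Max[of v j1] F_ge_Min[of v j0] unfolding assms j0 j1 by simp
qed

end

section \<open>Rational functions near \<open>1\<close>\<close>

lemma eventually_unit_interval_at_left_1: "\<forall>\<^sub>F x in at_left (1::real). 0 < x \<and> x < 1"
  using eventually_at_left_real[of 0 1] by (auto elim: eventually_mono)

lemma isCont_tendsto_at_left: "isCont g (x::real) \<Longrightarrow> (g \<longlongrightarrow> g x) (at_left x)"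
  by (rule tendsto_mono[OF at_le isContD]) auto

lemma poly_decomp_at_1:
  fixes p :: "real poly"
  assumes "p \<noteq> 0"
  obtains k q where "poly q 1 \<noteq> 0" "\<And>x. poly p x = (x - 1)^k * poly q x"
proof -
  obtain q k where "p = [:-1,1:] ^ k * q" "\<not> [:-1,1:] dvd q"
    using order_decomp[OF assms, of 1] by auto
  then show ?thesis using that[of q k] poly_eq_0_iff_dvd[of q 1] by (simp add: poly_power)
qed

lemma poly_sgn_at_left_1:
  fixes p :: "real poly"
  assumes "p \<noteq> 0"
  shows "\<exists>s \<in> {-1, 1}. \<forall>\<^sub>F x in at_left 1. sgn (poly p x) = s"
proof -
  obtain k q where q1: "poly q 1 \<noteq> 0" and p: "\<And>x. poly p x = (x - 1)^k * poly q x"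
    using poly_decomp_at_1[OF assms] by blast
  have lim: "(poly q \<longlongrightarrow> poly q 1) (at_left 1)" by (rule isCont_tendsto_at_left) simp
  have "\<forall>\<^sub>F x in at_left 1. sgn (poly q x) = sgn (poly q 1)"
  proof (cases "poly q 1 > 0")
    case True
    then show ?thesis using order_tendstoD(1)[OF lim True] by (auto elim: eventually_mono)
  next
    case False
    then have "poly q 1 < 0" using q1 by simp
    then show ?thesis using order_tendstoD(2)[OF lim, of 0] by (auto elim: eventually_mono)
  qed
  then have "\<forall>\<^sub>F x in at_left 1. sgn (poly p x) = (-1)^k * sgn (poly q 1)"
    using eventually_unit_interval_at_left_1 by eventually_elim (simp add: p sgn_mult)
  moreover have "(-1)^k * sgn (poly q 1) \<in> {-1, 1 :: real}"
  proof -
    have "(-1::real)^k \<in> {-1, 1}" by (cases "even k") simp_all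
    moreover have "sgn (poly q 1) \<in> {-1, 1}" using q1 by (cases "poly q 1 > 0") auto
    ultimately show ?thesis by auto
  qed
  ultimately show ?thesis by blast
qed

definition poly_fun :: "(real \<Rightarrow> real) \<Rightarrow> bool" where
  "poly_fun f \<longleftrightarrow> (\<exists>p. \<forall>x. f x = poly p x)"

lemma poly_fun_const [simp]: "poly_fun (\<lambda>x. c)"
  unfolding poly_fun_def by (rule exI[of _ "[:c:]"]) simp

lemma poly_fun_id [simp]: "poly_fun (\<lambda>x. x)"
  unfolding poly_fun_def by (rule exI[of _ "[:0,1:]"]) simp

lemma poly_fun_add: "poly_fun f \<Longrightarrow> poly_fun g \<Longrightarrow> poly_fun (\<lambda>x. f x + g x)"
  unfolding poly_fun_def by (metis poly_add)

lemma poly_fun_mult: "poly_fun f \<Longrightarrow> poly_fun g \<Longrightarrow> poly_fun (\<lambda>x. f x * g x)"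
  unfolding poly_fun_def by (metis poly_mult)

lemma poly_fun_diff: "poly_fun f \<Longrightarrow> poly_fun g \<Longrightarrow> poly_fun (\<lambda>x. f x - g x)"
  unfolding poly_fun_def by (metis poly_diff)

lemma poly_fun_if: "poly_fun f \<Longrightarrow> poly_fun g \<Longrightarrow> poly_fun (\<lambda>x. if b then f x else g x)"
  by (cases b) simp_all

lemma poly_fun_sum:
  "finite S \<Longrightarrow> (\<And>s. s \<in> S \<Longrightarrow> poly_fun (f s)) \<Longrightarrow> poly_fun (\<lambda>x. \<Sum>s\<in>S. f s x)"
  by (induction S rule: finite_induct) (auto intro: poly_fun_add)

lemma poly_fun_prod:
  "finite S \<Longrightarrow> (\<And>s. s \<in> S \<Longrightarrow> poly_fun (f s)) \<Longrightarrow> poly_fun (\<lambda>x. \<Prod>s\<in>S. f s x)"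
  by (induction S rule: finite_induct) (auto intro: poly_fun_mult)

lemma poly_fun_det:
  fixes A :: "real \<Rightarrow> real^'n^'n"
  assumes "\<And>i j. poly_fun (\<lambda>x. A x $ i $ j)"
  shows "poly_fun (\<lambda>x. det (A x))"
  unfolding det_def
  by (intro poly_fun_sum poly_fun_mult poly_fun_prod assms) (auto simp: finite_permutations)

definition rat_germ :: "(real \<Rightarrow> real) \<Rightarrow> bool" where
  "rat_germ f \<longleftrightarrow> (\<exists>p q. q \<noteq> 0 \<and> (\<forall>\<^sub>F x in at_left 1. f x = poly p x / poly q x))"

lemma rat_germ_cong:
  assumes "rat_germ f" "\<forall>\<^sub>F x in at_left 1. f x = g x"
  shows "rat_germ g"
proof -
  obtain p q where q: "q \<noteq> 0" and f: "\<forall>\<^sub>F x in at_left 1. f x = poly p x / poly q x"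
    using assms(1) unfolding rat_germ_def by blast
  from f assms(2) have "\<forall>\<^sub>F x in at_left 1. g x = poly p x / poly q x" by eventually_elim simp
  with q show ?thesis unfolding rat_germ_def by blast
qed

lemma rat_germ_divide:
  assumes "poly_fun f" "poly_fun g" "g x\<^sub>0 \<noteq> 0"
  shows "rat_germ (\<lambda>x. f x / g x)"
proof -
  obtain p q where "\<forall>x. f x = poly p x" "\<forall>x. g x = poly q x"
    using assms(1,2) unfolding poly_fun_def by blast
  with assms(3) show ?thesis unfolding rat_germ_def by (intro exI[of _ p] exI[of _ q]) auto
qed

lemma rat_germ_poly_fun: "poly_fun f \<Longrightarrow> rat_germ f"
  using rat_germ_divide[of f "\<lambda>x. 1" 0] by simp

lemma rat_germ_const [simp]: "rat_germ (\<lambda>x. c)"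
  by (simp add: rat_germ_poly_fun)

lemma rat_germ_id [simp]: "rat_germ (\<lambda>x. x)"
  by (simp add: rat_germ_poly_fun)

lemma poly_nonzero_at_left_1: "p \<noteq> 0 \<Longrightarrow> \<forall>\<^sub>F x in at_left 1. poly p x \<noteq> (0::real)"
  using poly_sgn_at_left_1[of p] by (auto elim: eventually_mono)

lemma rat_germ_add:
  assumes "rat_germ f" "rat_germ g"
  shows "rat_germ (\<lambda>x. f x + g x)"
proof -
  obtain p1 q1 p2 q2 where q: "q1 \<noteq> 0" "q2 \<noteq> 0"
    and f: "\<forall>\<^sub>F x in at_left 1. f x = poly p1 x / poly q1 x"
    and g: "\<forall>\<^sub>F x in at_left 1. g x = poly p2 x / poly q2 x"
    using assms unfolding rat_germ_def by blast
  from f g poly_nonzero_at_left_1[OF q(1)] poly_nonzero_at_left_1[OF q(2)]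
  have "\<forall>\<^sub>F x in at_left 1. f x + g x = poly (p1 * q2 + p2 * q1) x / poly (q1 * q2) x"
    by eventually_elim (simp add: add_frac_eq)
  then show ?thesis unfolding rat_germ_def using q by (intro exI[of _ "p1 * q2 + p2 * q1"] exI[of _ "q1 * q2"]) simp
qed

lemma rat_germ_mult:
  assumes "rat_germ f" "rat_germ g"
  shows "rat_germ (\<lambda>x. f x * g x)"
proof -
  obtain p1 q1 p2 q2 where q: "q1 \<noteq> 0" "q2 \<noteq> 0"
    and f: "\<forall>\<^sub>F x in at_left 1. f x = poly p1 x / poly q1 x"
    and g: "\<forall>\<^sub>F x in at_left 1. g x = poly p2 x / poly q2 x"
    using assms unfolding rat_germ_def by blast
  from f g have "\<forall>\<^sub>F x in at_left 1. f x * g x = poly (p1 * p2) x / poly (q1 * q2) x"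
    by eventually_elim simp
  then show ?thesis unfolding rat_germ_def using q by (intro exI[of _ "p1 * p2"] exI[of _ "q1 * q2"]) simp
qed

lemma rat_germ_diff: "rat_germ f \<Longrightarrow> rat_germ g \<Longrightarrow> rat_germ (\<lambda>x. f x - g x)"
  using rat_germ_add[of f "\<lambda>x. -1 * g x"] rat_germ_mult[of "\<lambda>x. -1" g] by simp

lemma rat_germ_sum:
  "finite S \<Longrightarrow> (\<And>s. s \<in> S \<Longrightarrow> rat_germ (f s)) \<Longrightarrow> rat_germ (\<lambda>x. \<Sum>s\<in>S. f s x)"
  by (induction S rule: finite_induct) (auto intro: rat_germ_add)

lemma rat_germ_sgn:
  assumes "rat_germ f"
  shows "\<exists>s. \<forall>\<^sub>F x in at_left 1. sgn (f x) = s"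
proof -
  obtain p q where q: "q \<noteq> 0" and f: "\<forall>\<^sub>F x in at_left 1. f x = poly p x / poly q x"
    using assms unfolding rat_germ_def by blast
  show ?thesis
  proof (cases "p = 0")
    case True
    from f have "\<forall>\<^sub>F x in at_left 1. sgn (f x) = 0" by eventually_elim (simp add: True)
    then show ?thesis ..
  next
    case False
    obtain s t where "\<forall>\<^sub>F x in at_left 1. sgn (poly p x) = s" "\<forall>\<^sub>F x in at_left 1. sgn (poly q x) = t"
      using poly_sgn_at_left_1[OF False] poly_sgn_at_left_1[OF q] by blast
    with f have "\<forall>\<^sub>F x in at_left 1. sgn (f x) = s / t"
      by eventually_elim (simp add: sgn_divide)
    then show ?thesis ..
  qed
qed

lemma rat_germ_le_cases:
  assumes "rat_germ f" "rat_germ g"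
  shows "(\<forall>\<^sub>F x in at_left 1. f x \<le> g x) \<or> (\<forall>\<^sub>F x in at_left 1. g x \<le> f x)"
proof -
  obtain s where s: "\<forall>\<^sub>F x in at_left 1. sgn (f x - g x) = s"
    using rat_germ_sgn[OF rat_germ_diff[OF assms]] by blast
  show ?thesis
  proof (cases "s \<le> 0")
    case True
    from s have "\<forall>\<^sub>F x in at_left 1. f x \<le> g x"
      by eventually_elim (use True sgn_le_0_iff in fastforce)
    then show ?thesis ..
  next
    case False
    from s have "\<forall>\<^sub>F x in at_left 1. g x \<le> f x"
      by eventually_elim (use False sgn_le_0_iff in fastforce)
    then show ?thesis ..
  qed
qed

lemma rat_germ_eq_cases:
  assumes "rat_germ f" "rat_germ g"
  shows "(\<forall>\<^sub>F x in at_left 1. f x = g x) \<or> (\<forall>\<^sub>F x in at_left 1. f x \<noteq> g x)"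
proof -
  obtain s where s: "\<forall>\<^sub>F x in at_left 1. sgn (f x - g x) = s"
    using rat_germ_sgn[OF rat_germ_diff[OF assms]] by blast
  show ?thesis
  proof (cases "s = 0")
    case True
    from s have "\<forall>\<^sub>F x in at_left 1. f x = g x" by eventually_elim (simp add: True sgn_0_0)
    then show ?thesis ..
  next
    case False
    from s have "\<forall>\<^sub>F x in at_left 1. f x \<noteq> g x" by eventually_elim (use False in auto)
    then show ?thesis ..
  qed
qed

lemma rat_germ_min:
  assumes "rat_germ f" "rat_germ g"
  shows "rat_germ (\<lambda>x. min (f x) (g x))"
  using rat_germ_le_cases[OF assms]
proof
  assume "\<forall>\<^sub>F x in at_left 1. f x \<le> g x"
  then show ?thesis by (rule rat_germ_cong[OF assms(1) eventually_mono]) auto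
next
  assume "\<forall>\<^sub>F x in at_left 1. g x \<le> f x"
  then show ?thesis by (rule rat_germ_cong[OF assms(2) eventually_mono]) auto
qed

lemma rat_germ_max:
  assumes "rat_germ f" "rat_germ g"
  shows "rat_germ (\<lambda>x. max (f x) (g x))"
  using rat_germ_le_cases[OF assms]
proof
  assume "\<forall>\<^sub>F x in at_left 1. f x \<le> g x"
  then show ?thesis by (rule rat_germ_cong[OF assms(2) eventually_mono]) auto
next
  assume "\<forall>\<^sub>F x in at_left 1. g x \<le> f x"
  then show ?thesis by (rule rat_germ_cong[OF assms(1) eventually_mono]) auto
qed

lemma rat_germ_Min:
  "finite S \<Longrightarrow> S \<noteq> {} \<Longrightarrow> (\<And>s. s \<in> S \<Longrightarrow> rat_germ (f s)) \<Longrightarrow> rat_germ (\<lambda>x. Min ((\<lambda>s. f s x) ` S))"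
proof (induction S rule: finite_ne_induct)
  case (insert a S)
  then have "rat_germ (\<lambda>x. min (f a x) (Min ((\<lambda>s. f s x) ` S)))" by (intro rat_germ_min) auto
  then show ?case using insert by (simp add: Min_insert)
qed simp

lemma rat_germ_Max:
  "finite S \<Longrightarrow> S \<noteq> {} \<Longrightarrow> (\<And>s. s \<in> S \<Longrightarrow> rat_germ (f s)) \<Longrightarrow> rat_germ (\<lambda>x. Max ((\<lambda>s. f s x) ` S))"
proof (induction S rule: finite_ne_induct)
  case (insert a S)
  then have "rat_germ (\<lambda>x. max (f a x) (Max ((\<lambda>s. f s x) ` S)))" by (intro rat_germ_max) auto
  then show ?case using insert by (simp add: Max_insert)
qed simp

lemma poly_quotient_at_left_1:
  fixes p q :: "real poly"
  assumes "p \<noteq> 0" "q \<noteq> 0"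
  obtains (regular) k p1 q1 where "poly q1 1 \<noteq> 0"
      "\<forall>\<^sub>F x in at_left 1. poly p x / poly q x = (x - 1)^k * poly p1 x / poly q1 x"
  | (pole) k p1 q1 where "poly p1 1 \<noteq> 0" "poly q1 1 \<noteq> 0" "k \<ge> 1"
      "\<forall>\<^sub>F x in at_left 1. poly p x / poly q x = poly p1 x / ((x - 1)^k * poly q1 x)"
proof -
  obtain a p1 where p1: "poly p1 1 \<noteq> 0" and p: "\<And>x. poly p x = (x - 1)^a * poly p1 x"
    using poly_decomp_at_1[OF assms(1)] by blast
  obtain b q1 where q1: "poly q1 1 \<noteq> 0" and q: "\<And>x. poly q x = (x - 1)^b * poly q1 x"
    using poly_decomp_at_1[OF assms(2)] by blast
  show ?thesis
  proof (cases "b \<le> a")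
    case True
    have eq: "poly p x / poly q x = (x - 1)^(a - b) * poly p1 x / poly q1 x" if "x < 1" for x
    proof -
      have "poly p x / poly q x = ((x - 1)^(a - b) * poly p1 x * (x - 1)^b) / (poly q1 x * (x - 1)^b)"
        using True by (simp add: p q ac_simps flip: power_add)
      also have "\<dots> = (x - 1)^(a - b) * poly p1 x / poly q1 x"
        using that by (intro mult_divide_mult_cancel_right) simp
      finally show ?thesis .
    qed
    have "\<forall>\<^sub>F x in at_left 1. poly p x / poly q x = (x - 1)^(a - b) * poly p1 x / poly q1 x"
      using eventually_unit_interval_at_left_1 by (rule eventually_mono) (simp add: eq)
    with q1 show ?thesis by (rule regular)
  next
    case False
    have eq: "poly p x / poly q x = poly p1 x / ((x - 1)^(b - a) * poly q1 x)" if "x < 1" for x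
    proof -
      have "poly p x / poly q x = (poly p1 x * (x - 1)^a) / (((x - 1)^(b - a) * poly q1 x) * (x - 1)^a)"
        using False by (simp add: p q ac_simps flip: power_add)
      also have "\<dots> = poly p1 x / ((x - 1)^(b - a) * poly q1 x)"
        using that by (intro mult_divide_mult_cancel_right) simp
      finally show ?thesis .
    qed
    have "\<forall>\<^sub>F x in at_left 1. poly p x / poly q x = poly p1 x / ((x - 1)^(b - a) * poly q1 x)"
      using eventually_unit_interval_at_left_1 by (rule eventually_mono) (simp add: eq)
    with p1 q1 False show ?thesis by (intro pole) auto
  qed
qed

lemma pole_at_1_unbounded:
  fixes p q :: "real poly"
  assumes "poly p 1 \<noteq> 0" "poly q 1 \<noteq> 0" "k \<ge> 1"
  shows "\<not> (\<forall>\<^sub>F x in at_left 1. \<bar>poly p x / ((x - 1)^k * poly q x)\<bar> \<le> B)"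
proof
  assume "\<forall>\<^sub>F x in at_left 1. \<bar>poly p x / ((x - 1)^k * poly q x)\<bar> \<le> B"
  moreover have "(poly q \<longlongrightarrow> poly q 1) (at_left 1)" by (rule isCont_tendsto_at_left) simp
  note tendsto_imp_eventually_ne[OF this assms(2)]
  ultimately have bound: "\<forall>\<^sub>F x in at_left 1. \<bar>poly p x\<bar> \<le> B * \<bar>(x - 1)^k * poly q x\<bar>"
    using eventually_unit_interval_at_left_1
    by eventually_elim (simp add: abs_divide pos_divide_le_eq abs_mult)
  have "((\<lambda>x. B * \<bar>(x - 1)^k * poly q x\<bar>) \<longlongrightarrow> B * \<bar>(1 - 1)^k * poly q 1\<bar>) (at_left 1)"
    by (rule isCont_tendsto_at_left) (intro continuous_intros)
  then have "((\<lambda>x. B * \<bar>(x - 1)^k * poly q x\<bar>) \<longlongrightarrow> 0) (at_left 1)" using assms(3) by (simp add: zero_power)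
  then have "((\<lambda>x. \<bar>poly p x\<bar>) \<longlongrightarrow> 0) (at_left 1)"
    by (rule tendsto_sandwich[OF _ bound tendsto_const, rotated]) simp
  moreover have "((\<lambda>x. \<bar>poly p x\<bar>) \<longlongrightarrow> \<bar>poly p 1\<bar>) (at_left 1)"
    by (rule isCont_tendsto_at_left) (intro continuous_intros)
  ultimately show False using assms(1) tendsto_unique[OF trivial_limit_at_left_real] by fastforce
qed

lemma rat_germ_bounded_convergent:
  assumes "rat_germ f" "\<forall>\<^sub>F x in at_left 1. \<bar>f x\<bar> \<le> B"
  shows "\<exists>L. (f \<longlongrightarrow> L) (at_left 1)"
proof -
  obtain p q where q: "q \<noteq> 0" and f: "\<forall>\<^sub>F x in at_left 1. f x = poly p x / poly q x"
    using assms(1) unfolding rat_germ_def by blast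
  show ?thesis
  proof (cases "p = 0")
    case True
    then have "(f \<longlongrightarrow> 0) (at_left 1)" using f by (auto intro: tendsto_eventually elim: eventually_mono)
    then show ?thesis ..
  next
    case False
    then show ?thesis
    proof (rule poly_quotient_at_left_1[OF _ q])
      fix k p1 q1
      assume regular: "poly q1 1 \<noteq> 0"
        "\<forall>\<^sub>F x in at_left 1. poly p x / poly q x = (x - 1)^k * poly p1 x / poly q1 x"
      let ?g = "\<lambda>x. (x - 1)^k * poly p1 x / poly q1 x"
      have "(?g \<longlongrightarrow> ?g 1) (at_left 1)"
        by (rule isCont_tendsto_at_left) (use regular(1) in \<open>intro continuous_intros\<close>)
      moreover from f regular(2) have "\<forall>\<^sub>F x in at_left 1. f x = ?g x" by eventually_elim simp
      ultimately have "(f \<longlongrightarrow> ?g 1) (at_left 1)" by (simp add: tendsto_cong)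
      then show ?thesis ..
    next
      fix k p1 q1
      assume pole: "poly p1 1 \<noteq> 0" "poly q1 1 \<noteq> 0" "k \<ge> 1"
        "\<forall>\<^sub>F x in at_left 1. poly p x / poly q x = poly p1 x / ((x - 1)^k * poly q1 x)"
      from f pole(4) assms(2)
      have "\<forall>\<^sub>F x in at_left 1. \<bar>poly p1 x / ((x - 1)^k * poly q1 x)\<bar> \<le> B" by eventually_elim simp
      with pole_at_1_unbounded[OF pole(1-3)] show ?thesis by blast
    qed
  qed
qed

section \<open>Positional strategies and Blackwell optimality\<close>

context shapley_game
begin

definition is_policy :: "('n \<Rightarrow> 'm) \<Rightarrow> ('n \<Rightarrow> 'q) \<Rightarrow> bool" where
  "is_policy \<sigma> \<tau> \<longleftrightarrow> (\<forall>j. \<sigma> j \<in> Is j \<and> \<tau> j \<in> Hs (\<sigma> j))"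

definition policy_matrix :: "('n \<Rightarrow> 'q) \<Rightarrow> real^'n^'n" where
  "policy_matrix \<tau> = (\<chi> j l. P$(\<tau> j)$l)"

definition policy_payoff :: "('n \<Rightarrow> 'm) \<Rightarrow> ('n \<Rightarrow> 'q) \<Rightarrow> real^'n" where
  "policy_payoff \<sigma> \<tau> = (\<chi> j. c (\<sigma> j) j (\<tau> j))"

abbreviation resolvent :: "('n \<Rightarrow> 'q) \<Rightarrow> real \<Rightarrow> real^'n^'n" where
  "resolvent \<tau> \<alpha> \<equiv> mat 1 - \<alpha> *\<^sub>R policy_matrix \<tau>"

text \<open>The solution of \<open>v = c + \<alpha> T v\<close> written by Cramer's rule, which exhibits it as a
  rational function of \<open>\<alpha>\<close>.\<close>
definition policy_value :: "('n \<Rightarrow> 'm) \<Rightarrow> ('n \<Rightarrow> 'q) \<Rightarrow> real \<Rightarrow> real^'n" where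
  "policy_value \<sigma> \<tau> \<alpha> =
     (\<chi> k. det (\<chi> i j. if j = k then policy_payoff \<sigma> \<tau> $ i else resolvent \<tau> \<alpha> $ i $ j)
           / det (resolvent \<tau> \<alpha>))"

lemma policy_matrix_stochastic: "stochastic (policy_matrix \<tau>)"
  using P_stochastic unfolding stochastic_def policy_matrix_def by simp

lemma policy_matrix_mult: "(policy_matrix \<tau> *v x)$j = (P *v x)$(\<tau> j)"
  by (simp add: policy_matrix_def matrix_vector_mult_def)

lemma resolvent_mult: "resolvent \<tau> \<alpha> *v x = x - \<alpha> *\<^sub>R (policy_matrix \<tau> *v x)"
  by (simp add: matrix_vector_mult_diff_rdistrib scaleR_matrix_vector_assoc)

lemma det_resolvent_nonzero:
  assumes "0 \<le> \<alpha>" "\<alpha> < 1"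
  shows "det (resolvent \<tau> \<alpha>) \<noteq> 0"
proof -
  have "x = 0" if "resolvent \<tau> \<alpha> *v x = 0" for x
  proof -
    have "x = \<alpha> *\<^sub>R (policy_matrix \<tau> *v x)" using that by (simp add: resolvent_mult)
    then have "infnorm x = \<alpha> * infnorm (policy_matrix \<tau> *v x)"
      using assms(1) by (metis infnorm_mul abs_of_nonneg)
    also have "\<dots> \<le> \<alpha> * infnorm x"
      using assms(1) by (intro mult_left_mono stochastic_infnorm_mult policy_matrix_stochastic)
    finally have "(1 - \<alpha>) * infnorm x \<le> 0" by (simp add: algebra_simps)
    then show "x = 0" using assms(2) infnorm_eq_0_cart[of x] by (simp add: mult_le_0_iff)
  qed
  then show ?thesis
    by (simp add: invertible_det_nz[symmetric] invertible_left_inverse matrix_left_invertible_ker)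
qed

lemma policy_value_iff:
  assumes "0 \<le> \<alpha>" "\<alpha> < 1"
  shows "u = policy_payoff \<sigma> \<tau> + \<alpha> *\<^sub>R (policy_matrix \<tau> *v u) \<longleftrightarrow> u = policy_value \<sigma> \<tau> \<alpha>"
proof -
  have "u = policy_payoff \<sigma> \<tau> + \<alpha> *\<^sub>R (policy_matrix \<tau> *v u) \<longleftrightarrow>
        resolvent \<tau> \<alpha> *v u = policy_payoff \<sigma> \<tau>"
    by (auto simp: resolvent_mult algebra_simps scaleR_matrix_vector_assoc)
  also have "\<dots> \<longleftrightarrow> u = policy_value \<sigma> \<tau> \<alpha>"
    unfolding cramer[OF det_resolvent_nonzero[OF assms]] policy_value_def ..
  finally show ?thesis .
qed

lemma F_eq_policy: "\<exists>\<sigma> \<tau>. is_policy \<sigma> \<tau> \<and> F x = policy_payoff \<sigma> \<tau> + policy_matrix \<tau> *v x"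
proof -
  let ?g = "\<lambda>i j. Max ((\<lambda>h. c i j h + (P *v x)$h) ` Hs i)"
  have "\<exists>i h. i \<in> Is j \<and> h \<in> Hs i \<and> F x $ j = c i j h + (P *v x)$h" for j
  proof -
    have "F x $ j \<in> (\<lambda>i. ?g i j) ` Is j"
      unfolding minmax_op_def vec_lambda_beta by (rule Min_in) (auto simp: Is_nonempty)
    then obtain i where i: "i \<in> Is j" "F x $ j = ?g i j" by auto
    have "?g i j \<in> (\<lambda>h. c i j h + (P *v x)$h) ` Hs i" by (rule Max_in) (auto simp: Hs_nonempty)
    then obtain h where "h \<in> Hs i" "?g i j = c i j h + (P *v x)$h" by auto
    with i show ?thesis by auto
  qed
  then obtain \<sigma> \<tau> where "\<And>j. \<sigma> j \<in> Is j \<and> \<tau> j \<in> Hs (\<sigma> j) \<and> F x $ j = c (\<sigma> j) j (\<tau> j) + (P *v x)$(\<tau> j)"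
    by metis
  then show ?thesis
    unfolding is_policy_def by (auto simp: vec_eq_iff policy_payoff_def policy_matrix_mult)
qed

lemma disc_value_policy:
  assumes "0 \<le> \<alpha>" "\<alpha> < 1"
  shows "\<exists>\<sigma> \<tau>. is_policy \<sigma> \<tau> \<and> disc_value F \<alpha> = policy_value \<sigma> \<tau> \<alpha>"
proof -
  obtain \<sigma> \<tau> where "is_policy \<sigma> \<tau>"
    and "F (\<alpha> *\<^sub>R disc_value F \<alpha>) = policy_payoff \<sigma> \<tau> + policy_matrix \<tau> *v (\<alpha> *\<^sub>R disc_value F \<alpha>)"
    using F_eq_policy by blast
  with disc_value_fixpoint[OF assms] policy_value_iff[OF assms] show ?thesis
    by (metis matrix_vector_mult_scaleR)
qed

definition policy_optimal :: "('n \<Rightarrow> 'm) \<Rightarrow> ('n \<Rightarrow> 'q) \<Rightarrow> real \<Rightarrow> bool" where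
  "policy_optimal \<sigma> \<tau> \<alpha> \<longleftrightarrow> F (\<alpha> *\<^sub>R policy_value \<sigma> \<tau> \<alpha>) = policy_value \<sigma> \<tau> \<alpha>"

lemma rat_germ_policy_value: "rat_germ (\<lambda>\<alpha>. policy_value \<sigma> \<tau> \<alpha> $ k)"
proof -
  have entry: "poly_fun (\<lambda>\<alpha>. resolvent \<tau> \<alpha> $ i $ j)" for i j
    by (simp add: mat_def poly_fun_diff poly_fun_mult)
  have "rat_germ (\<lambda>\<alpha>. det (\<chi> i j. if j = k then policy_payoff \<sigma> \<tau> $ i else resolvent \<tau> \<alpha> $ i $ j)
                     / det (resolvent \<tau> \<alpha>))"
  proof (rule rat_germ_divide)
    show "poly_fun (\<lambda>\<alpha>. det (\<chi> i j. if j = k then policy_payoff \<sigma> \<tau> $ i else resolvent \<tau> \<alpha> $ i $ j))"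
      by (rule poly_fun_det) (simp only: vec_lambda_beta, intro poly_fun_if poly_fun_const entry)
    show "poly_fun (\<lambda>\<alpha>. det (resolvent \<tau> \<alpha>))" by (rule poly_fun_det) (rule entry)
    show "det (resolvent \<tau> 0) \<noteq> 0" by (rule det_resolvent_nonzero) auto
  qed
  then show ?thesis unfolding policy_value_def by simp
qed

lemma rat_germ_F_policy_value: "rat_germ (\<lambda>\<alpha>. F (\<alpha> *\<^sub>R policy_value \<sigma> \<tau> \<alpha>) $ j)"
proof -
  have "rat_germ (\<lambda>\<alpha>. (P *v (\<alpha> *\<^sub>R policy_value \<sigma> \<tau> \<alpha>))$h)" for h
    unfolding matrix_vector_mult_def
    by (auto intro!: rat_germ_sum rat_germ_mult rat_germ_policy_value)
  then show ?thesis
    unfolding minmax_op_def vec_lambda_beta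
    by (intro rat_germ_Min rat_germ_Max rat_germ_add) (auto simp: Is_nonempty Hs_nonempty)
qed

text \<open>Optimality of a fixed pair of strategies is a finite conjunction of equalities between
  rational functions of \<open>\<alpha>\<close>, hence it holds either for all \<open>\<alpha>\<close> near \<open>1\<close> or for none.\<close>
lemma policy_optimal_cases:
  "(\<forall>\<^sub>F \<alpha> in at_left 1. policy_optimal \<sigma> \<tau> \<alpha>) \<or> (\<forall>\<^sub>F \<alpha> in at_left 1. \<not> policy_optimal \<sigma> \<tau> \<alpha>)"
proof (cases "\<forall>j. \<forall>\<^sub>F \<alpha> in at_left 1. F (\<alpha> *\<^sub>R policy_value \<sigma> \<tau> \<alpha>) $ j = policy_value \<sigma> \<tau> \<alpha> $ j")
  case True
  then have "\<forall>\<^sub>F \<alpha> in at_left 1. \<forall>j. F (\<alpha> *\<^sub>R policy_value \<sigma> \<tau> \<alpha>) $ j = policy_value \<sigma> \<tau> \<alpha> $ j"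
    by (simp add: eventually_all_finite)
  then show ?thesis by (auto simp: policy_optimal_def vec_eq_iff elim: eventually_mono)
next
  case False
  then obtain j where "\<not> (\<forall>\<^sub>F \<alpha> in at_left 1. F (\<alpha> *\<^sub>R policy_value \<sigma> \<tau> \<alpha>) $ j = policy_value \<sigma> \<tau> \<alpha> $ j)"
    by blast
  then have "\<forall>\<^sub>F \<alpha> in at_left 1. F (\<alpha> *\<^sub>R policy_value \<sigma> \<tau> \<alpha>) $ j \<noteq> policy_value \<sigma> \<tau> \<alpha> $ j"
    using rat_germ_eq_cases[OF rat_germ_F_policy_value rat_germ_policy_value] by blast
  then have "\<forall>\<^sub>F \<alpha> in at_left 1. \<not> policy_optimal \<sigma> \<tau> \<alpha>"
    by (rule eventually_mono) (auto simp: policy_optimal_def)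
  then show ?thesis ..
qed

text \<open>For every \<open>\<alpha>\<close> some of the finitely many policies is optimal, so some policy is optimal
  for all \<open>\<alpha>\<close> close to \<open>1\<close>.\<close>
lemma blackwell_policy_exists:
  "\<exists>\<sigma> \<tau>. is_policy \<sigma> \<tau> \<and> (\<forall>\<^sub>F \<alpha> in at_left 1. disc_value F \<alpha> = policy_value \<sigma> \<tau> \<alpha>)"
proof (rule ccontr)
  assume none: "\<not> ?thesis"
  let ?V = "{(\<sigma>, \<tau>). is_policy \<sigma> \<tau>}"
  have "\<forall>\<^sub>F \<alpha> in at_left 1. \<not> policy_optimal \<sigma> \<tau> \<alpha>" if "is_policy \<sigma> \<tau>" for \<sigma> \<tau>
  proof -
    have "\<not> (\<forall>\<^sub>F \<alpha> in at_left 1. policy_optimal \<sigma> \<tau> \<alpha>)"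
    proof
      assume "\<forall>\<^sub>F \<alpha> in at_left 1. policy_optimal \<sigma> \<tau> \<alpha>"
      with eventually_unit_interval_at_left_1
      have "\<forall>\<^sub>F \<alpha> in at_left 1. disc_value F \<alpha> = policy_value \<sigma> \<tau> \<alpha>"
        by eventually_elim (auto intro: disc_value_eqI simp: policy_optimal_def)
      with none that show False by blast
    qed
    then show ?thesis using policy_optimal_cases[of \<sigma> \<tau>] by blast
  qed
  then have "\<forall>\<^sub>F \<alpha> in at_left 1. \<forall>(\<sigma>, \<tau>)\<in>?V. \<not> policy_optimal \<sigma> \<tau> \<alpha>"
    by (intro eventually_ball_finite) auto
  with eventually_unit_interval_at_left_1 have "\<forall>\<^sub>F \<alpha> in at_left (1::real). False"
  proof eventually_elim
    case (elim \<alpha>)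
    then obtain \<sigma> \<tau> where "is_policy \<sigma> \<tau>" "disc_value F \<alpha> = policy_value \<sigma> \<tau> \<alpha>"
      using disc_value_policy[of \<alpha>] by auto
    moreover from this have "policy_optimal \<sigma> \<tau> \<alpha>"
      using disc_value_fixpoint[of \<alpha>] elim by (simp add: policy_optimal_def)
    ultimately show False using elim by auto
  qed
  then show False by simp
qed

end

section \<open>The Blackwell bias\<close>

lemma diff_mult_divide_one_minus: "\<alpha> < 1 \<Longrightarrow> \<alpha> * (r / (1 - \<alpha>)) - r / (1 - \<alpha>) = - (r::real)"
proof -
  have "\<alpha> * t - t = - ((1 - \<alpha>) * t)" for t :: real by (simp add: algebra_simps)
  then have "\<alpha> * (r / (1 - \<alpha>)) - r / (1 - \<alpha>) = - ((1 - \<alpha>) * (r / (1 - \<alpha>)))" .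
  also assume "\<alpha> < 1"
  then have "(1 - \<alpha>) * (r / (1 - \<alpha>)) = r" by simp
  finally show ?thesis .
qed

locale blackwell_game = shapley_game Is Hs c P W
  for Is :: "'n::finite \<Rightarrow> 'm::finite set" and Hs :: "'m \<Rightarrow> 'q::finite set" and c P W +
  fixes v0 :: "real^'n" and \<rho> :: real and \<sigma>0 :: "'n \<Rightarrow> 'm" and \<tau>0 :: "'n \<Rightarrow> 'q"
  assumes bias: "F v0 = (\<chi> i. \<rho> + v0$i)"
    and blackwell_is_policy: "is_policy \<sigma>0 \<tau>0"
    and blackwell_policy_value: "\<forall>\<^sub>F \<alpha> in at_left 1. disc_value F \<alpha> = policy_value \<sigma>0 \<tau>0 \<alpha>"
begin

abbreviation T0 :: "real^'n^'n" where "T0 \<equiv> policy_matrix \<tau>0"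
abbreviation c0 :: "real^'n" where "c0 \<equiv> policy_payoff \<sigma>0 \<tau>0"
abbreviation vstar :: "real^'n" where "vstar \<equiv> blackwell_bias F"

lemma ergodic_const_eq: "ergodic_const F = \<rho>"
  by (rule ergodic_const_eqI[OF bias])

lemma c0_bound: "\<bar>c0 $ j - \<rho>\<bar> \<le> 2 * W"
proof -
  have "\<bar>c0 $ j\<bar> \<le> W"
    using blackwell_is_policy payoff_bound unfolding is_policy_def policy_payoff_def by simp
  then show ?thesis using bias_const_bound[OF bias] by linarith
qed

definition shifted_value :: "real \<Rightarrow> real^'n" where
  "shifted_value \<alpha> = disc_value F \<alpha> - (\<chi> i. \<rho> / (1 - \<alpha>))"

lemma shifted_value_fixpoint:
  assumes "0 \<le> \<alpha>" "\<alpha> < 1"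
  shows "shifted_value \<alpha> = (\<chi> j. F (\<alpha> *\<^sub>R shifted_value \<alpha>) $ j - \<rho>)"
proof -
  have "\<alpha> *\<^sub>R disc_value F \<alpha> = (\<chi> i. (\<alpha> *\<^sub>R shifted_value \<alpha>)$i + \<alpha> * (\<rho> / (1 - \<alpha>)))"
    by (simp add: vec_eq_iff shifted_value_def algebra_simps)
  then have "disc_value F \<alpha> $ j = F (\<alpha> *\<^sub>R shifted_value \<alpha>) $ j + \<alpha> * (\<rho> / (1 - \<alpha>))" for j
    using disc_value_fixpoint[OF assms] F_add_const by metis
  moreover have "\<alpha> * (\<rho> / (1 - \<alpha>)) - \<rho> / (1 - \<alpha>) = - \<rho>"
    using diff_mult_divide_one_minus[of \<alpha> \<rho>] assms by simp
  ultimately show ?thesis by (simp add: vec_eq_iff shifted_value_def)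
qed

lemma shifted_value_bound:
  assumes "0 \<le> \<alpha>" "\<alpha> < 1"
  shows "infnorm (shifted_value \<alpha>) \<le> 2 * infnorm v0"
proof -
  let ?w = "shifted_value \<alpha>"
  have "?w $ j = F (\<alpha> *\<^sub>R ?w) $ j - \<rho>" for j
    using arg_cong[where f = "\<lambda>x. x $ j", OF shifted_value_fixpoint[OF assms]] by simp
  then have "?w - v0 = F (\<alpha> *\<^sub>R ?w) - F v0" using bias by (simp add: vec_eq_iff)
  then have "infnorm (?w - v0) \<le> infnorm (\<alpha> *\<^sub>R ?w - v0)" using F_nonexpansive by simp
  also have "\<alpha> *\<^sub>R ?w - v0 = \<alpha> *\<^sub>R (?w - v0) + (\<alpha> - 1) *\<^sub>R v0" by (simp add: algebra_simps)
  also have "infnorm \<dots> \<le> \<alpha> * infnorm (?w - v0) + (1 - \<alpha>) * infnorm v0"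
    using infnorm_triangle[of "\<alpha> *\<^sub>R (?w - v0)" "(\<alpha> - 1) *\<^sub>R v0"] assms
    by (simp add: infnorm_mul abs_of_nonpos)
  finally have "(1 - \<alpha>) * infnorm (?w - v0) \<le> (1 - \<alpha>) * infnorm v0" by (simp add: algebra_simps)
  then have "infnorm (?w - v0) \<le> infnorm v0" using assms by simp
  then show ?thesis using infnorm_triangle[of "?w - v0" v0] by simp
qed

lemma rat_germ_shifted_value: "rat_germ (\<lambda>\<alpha>. shifted_value \<alpha> $ j)"
proof (rule rat_germ_cong)
  show "rat_germ (\<lambda>\<alpha>. policy_value \<sigma>0 \<tau>0 \<alpha> $ j - \<rho> / (1 - \<alpha>))"
    by (intro rat_germ_diff rat_germ_policy_value rat_germ_divide[of "\<lambda>\<alpha>. \<rho>" "\<lambda>\<alpha>. 1 - \<alpha>" 0])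
       (auto intro: poly_fun_diff)
  show "\<forall>\<^sub>F \<alpha> in at_left 1. policy_value \<sigma>0 \<tau>0 \<alpha> $ j - \<rho> / (1 - \<alpha>) = shifted_value \<alpha> $ j"
    using blackwell_policy_value by (rule eventually_mono) (simp add: shifted_value_def)
qed

text \<open>Boundedness and rationality in \<open>\<alpha>\<close> give the existence of the Blackwell bias.\<close>
lemma shifted_value_tendsto: "(shifted_value \<longlongrightarrow> vstar) (at_left 1)"
proof -
  have "\<exists>L. ((\<lambda>\<alpha>. shifted_value \<alpha> $ j) \<longlongrightarrow> L) (at_left 1)" for j
  proof (rule rat_germ_bounded_convergent[OF rat_germ_shifted_value])
    show "\<forall>\<^sub>F \<alpha> in at_left 1. \<bar>shifted_value \<alpha> $ j\<bar> \<le> 2 * infnorm v0"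
      using eventually_unit_interval_at_left_1
      by (rule eventually_mono) (auto intro: order_trans[OF component_le_infnorm_cart shifted_value_bound])
  qed
  then obtain L where "\<And>j. ((\<lambda>\<alpha>. shifted_value \<alpha> $ j) \<longlongrightarrow> L j) (at_left 1)" by metis
  then have lim: "(shifted_value \<longlongrightarrow> (\<chi> j. L j)) (at_left 1)" by (auto intro: vec_tendstoI)
  have "(\<lambda>\<alpha>. disc_value F \<alpha> - (\<chi> i. \<rho> / (1 - \<alpha>))) = shifted_value"
    by (simp add: fun_eq_iff shifted_value_def)
  then have "blackwell_bias F = (\<chi> j. L j)"
    unfolding blackwell_bias_def ergodic_const_eq using lim by (simp add: tendsto_Lim)
  with lim show ?thesis by simp
qed

lemma vstar_is_bias: "F vstar = (\<chi> i. \<rho> + vstar$i)"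
proof -
  have "((\<lambda>\<alpha>. F (\<alpha> *\<^sub>R shifted_value \<alpha>)) \<longlongrightarrow> F (1 *\<^sub>R vstar)) (at_left 1)"
    by (intro continuous_on_tendsto_compose[OF F_continuous] tendsto_scaleR shifted_value_tendsto
        tendsto_ident_at) auto
  moreover have "\<forall>\<^sub>F \<alpha> in at_left 1. F (\<alpha> *\<^sub>R shifted_value \<alpha>) = (\<chi> i. \<rho>) + shifted_value \<alpha>"
    using eventually_unit_interval_at_left_1
    by (rule eventually_mono) (subst (2) shifted_value_fixpoint, auto simp: vec_eq_iff)
  ultimately have "((\<lambda>\<alpha>. (\<chi> i. \<rho>) + shifted_value \<alpha>) \<longlongrightarrow> F vstar) (at_left 1)"
    by (simp add: tendsto_cong)
  moreover have "((\<lambda>\<alpha>. (\<chi> i. \<rho>) + shifted_value \<alpha>) \<longlongrightarrow> (\<chi> i. \<rho>) + vstar) (at_left 1)"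
    by (intro tendsto_add tendsto_const shifted_value_tendsto)
  ultimately have "F vstar = (\<chi> i. \<rho>) + vstar"
    by (rule tendsto_unique[OF trivial_limit_at_left_real])
  then show ?thesis by (simp add: vec_eq_iff)
qed

lemma shifted_value_policy_eq:
  "\<forall>\<^sub>F \<alpha> in at_left 1. shifted_value \<alpha> = (\<chi> j. c0 $ j - \<rho>) + \<alpha> *\<^sub>R (T0 *v shifted_value \<alpha>)"
  using eventually_unit_interval_at_left_1 blackwell_policy_value
proof eventually_elim
  case (elim \<alpha>)
  define t where "t = \<rho> / (1 - \<alpha>)"
  let ?w = "shifted_value \<alpha>"
  have w: "disc_value F \<alpha> = ?w + (\<chi> i. t)" by (simp add: shifted_value_def t_def)
  have eq: "disc_value F \<alpha> = c0 + \<alpha> *\<^sub>R (T0 *v disc_value F \<alpha>)"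
    using elim policy_value_iff[of \<alpha> "disc_value F \<alpha>"] by simp
  have comp: "?w $ j + t = c0 $ j + \<alpha> * (T0 *v ?w) $ j + \<alpha> * t" for j
    using arg_cong[where f = "\<lambda>x. x $ j", OF eq] unfolding w
    by (simp add: matrix_vector_right_distrib stochastic_mult_const[OF policy_matrix_stochastic] algebra_simps)
  have "\<alpha> * t - t = - \<rho>" using elim unfolding t_def by (intro diff_mult_divide_one_minus) simp
  then have "?w $ j = c0 $ j - \<rho> + \<alpha> * (T0 *v ?w) $ j" for j using comp[of j] by linarith
  then show ?case by (simp add: vec_eq_iff)
qed

lemma vstar_policy_eq: "vstar = (\<chi> j. c0 $ j - \<rho>) + T0 *v vstar"
proof -
  have "((\<lambda>\<alpha>. (\<chi> j. c0 $ j - \<rho>) + \<alpha> *\<^sub>R (T0 *v shifted_value \<alpha>))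
          \<longlongrightarrow> (\<chi> j. c0 $ j - \<rho>) + 1 *\<^sub>R (T0 *v vstar)) (at_left 1)"
    by (intro tendsto_intros bounded_linear.tendsto[OF matrix_vector_mul_bounded_linear]
        shifted_value_tendsto)
  then have "(shifted_value \<longlongrightarrow> (\<chi> j. c0 $ j - \<rho>) + T0 *v vstar) (at_left 1)"
    using shifted_value_policy_eq by (simp add: tendsto_cong)
  then show ?thesis using tendsto_unique[OF trivial_limit_at_left_real shifted_value_tendsto] by blast
qed

text \<open>Otherwise the maximum principle for the discounted equation keeps \<open>shifted_value\<close> away from
  \<open>vstar\<close> on \<open>C\<close>.\<close>
lemma vstar_sign_on_absorbing:
  assumes s: "s \<in> {-1, 1}" and C: "absorbing T0 C" "C \<noteq> {}"
  shows "\<exists>j\<in>C. s * vstar $ j \<le> 0"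
proof (rule ccontr)
  assume "\<not> ?thesis"
  then have pos: "\<forall>j\<in>C. s * vstar $ j > 0" by auto
  define \<epsilon> where "\<epsilon> = Min ((\<lambda>j. s * vstar $ j) ` C)"
  have "\<epsilon> \<in> (\<lambda>j. s * vstar $ j) ` C" unfolding \<epsilon>_def by (rule Min_in) (use C(2) in auto)
  then have \<epsilon>: "\<epsilon> > 0" using pos by auto
  have \<epsilon>_le: "\<epsilon> \<le> s * vstar $ j" if "j \<in> C" for j unfolding \<epsilon>_def by (rule Min_le) (use that in auto)
  obtain j0 where j0: "j0 \<in> C" using C(2) by blast
  have "\<forall>\<^sub>F \<alpha> in at_left 1. s * (shifted_value \<alpha> - vstar) $ j0 \<le> - \<epsilon>"
    using eventually_unit_interval_at_left_1 shifted_value_policy_eq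
  proof eventually_elim
    case (elim \<alpha>)
    let ?e = "s *\<^sub>R (shifted_value \<alpha> - vstar)"
    have "?e $ j = \<alpha> * (T0 *v ?e) $ j - (1 - \<alpha>) * (T0 *v (s *\<^sub>R vstar)) $ j" for j
    proof -
      have "shifted_value \<alpha> - vstar
          = ((\<chi> j. c0 $ j - \<rho>) + \<alpha> *\<^sub>R (T0 *v shifted_value \<alpha>)) - ((\<chi> j. c0 $ j - \<rho>) + T0 *v vstar)"
        using elim(2) vstar_policy_eq by (rule arg_cong2[where f = "(-)"])
      then have "shifted_value \<alpha> - vstar = \<alpha> *\<^sub>R (T0 *v shifted_value \<alpha>) - T0 *v vstar" by simp
      from arg_cong[where f = "\<lambda>x. s * x $ j", OF this] show ?thesis
        by (simp add: matrix_vector_mult_diff_distrib matrix_vector_mult_scaleR algebra_simps)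
    qed
    from discounted_max_principle[OF policy_matrix_stochastic C _ _ this _ j0] elim \<epsilon>_le
    show ?case by simp
  qed
  moreover have "((\<lambda>\<alpha>. s * (shifted_value \<alpha> - vstar) $ j0) \<longlongrightarrow> s * (vstar - vstar) $ j0) (at_left 1)"
    unfolding vector_minus_component by (intro tendsto_intros tendsto_vec_nth shifted_value_tendsto)
  ultimately have "s * (vstar - vstar) $ j0 \<le> - \<epsilon>"
    using tendsto_upperbound[OF _ _ trivial_limit_at_left_real] by blast
  with \<epsilon> show False by simp
qed

end

section \<open>Path weights in a Markov chain with labelled rows\<close>

text \<open>An abstraction of the matrix of a positional strategy: its rows are rows of \<open>P\<close>, selected
  through the label \<open>\<phi>\<close>, and \<open>N\<close> is the set of nondeterministic rows.\<close>
locale labelled_chain =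
  fixes T :: "real^'n::finite^'n" and \<phi> :: "'n \<Rightarrow> 'q::finite" and N :: "'q set" and M :: real
  assumes T_stochastic: "stochastic T"
    and rows_by_label: "\<phi> a = \<phi> b \<Longrightarrow> T$a = T$b"
    and entry_lower: "T$j$l > 0 \<Longrightarrow> (if \<phi> j \<in> N then 1 / M else 1) \<le> T$j$l"
    and M_ge_1: "M \<ge> 1"

locale labelled_chain_target = labelled_chain T \<phi> N M
  for T :: "real^'n::finite^'n" and \<phi> :: "'n \<Rightarrow> 'q::finite" and N M +
  fixes S :: "'n set"
begin

fun reach_in :: "nat \<Rightarrow> 'n set" where
  "reach_in 0 = S"
| "reach_in (Suc k) = reach_in k \<union> {a. \<exists>b\<in>reach_in k. T$a$b > 0}"

definition reaching :: "'n set" where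
  "reaching = (\<Union>k. reach_in k)"

definition hops :: "'n \<Rightarrow> nat" where
  "hops x = (LEAST k. x \<in> reach_in k)"

lemma reach_in_mono: "k \<le> k' \<Longrightarrow> reach_in k \<subseteq> reach_in k'"
  by (induction k' rule: dec_induct) auto

lemma reaching_reach_in: "x \<in> reach_in k \<Longrightarrow> x \<in> reaching"
  unfolding reaching_def by blast

lemma reach_in_iff:
  assumes "x \<in> reaching"
  shows "x \<in> reach_in k \<longleftrightarrow> hops x \<le> k"
proof
  show "x \<in> reach_in k \<Longrightarrow> hops x \<le> k" unfolding hops_def by (rule Least_le)
  obtain k0 where "x \<in> reach_in k0" using assms unfolding reaching_def by blast
  then have "x \<in> reach_in (hops x)" unfolding hops_def by (rule LeastI)
  then show "hops x \<le> k \<Longrightarrow> x \<in> reach_in k" using reach_in_mono by blast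
qed

lemma hops_eq_0_iff: "x \<in> reaching \<Longrightarrow> hops x = 0 \<longleftrightarrow> x \<in> S"
  using reach_in_iff[of x 0] by auto

lemma hops_edge:
  assumes "y \<in> reaching" "T$a$y > 0"
  shows "a \<in> reaching \<and> hops a \<le> Suc (hops y)"
proof -
  have "a \<in> reach_in (Suc (hops y))" using reach_in_iff[OF assms(1)] assms(2) by auto
  then show ?thesis using reaching_reach_in reach_in_iff by blast
qed

lemma hops_SucE:
  assumes "a \<in> reaching" "hops a = Suc k"
  obtains b where "b \<in> reaching" "T$a$b > 0" "hops b = k"
proof -
  have "a \<in> reach_in (Suc k)" "a \<notin> reach_in k"
    using reach_in_iff[OF assms(1), of "Suc k"] reach_in_iff[OF assms(1), of k] assms(2) by auto
  then obtain b where b: "b \<in> reach_in k" "T$a$b > 0" by auto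
  then have "b \<in> reaching" "hops b \<le> k" using reaching_reach_in reach_in_iff by auto
  moreover have "hops a \<le> Suc (hops b)" using hops_edge[OF \<open>b \<in> reaching\<close> b(2)] by simp
  ultimately show ?thesis using that b(2) assms(2) by force
qed

text \<open>A shortest path from \<open>a\<close> to \<open>S\<close> meets every label at most once: a state with the same label
  as an earlier state on the path would have the same row, giving a shortcut.\<close>
lemma label_fresh:
  assumes "a \<in> reaching" "hops a = Suc k" "x \<in> reaching" "1 \<le> hops x" "hops x \<le> k"
  shows "\<phi> a \<noteq> \<phi> x"
proof
  assume same: "\<phi> a = \<phi> x"
  obtain j where j: "hops x = Suc j" using assms(4) by (cases "hops x") auto
  obtain y where y: "y \<in> reaching" "T$x$y > 0" "hops y = j" using hops_SucE[OF assms(3) j] by blast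
  have "T$a$y > 0" using y(2) rows_by_label[OF same] by simp
  then have "hops a \<le> Suc j" using hops_edge[OF y(1)] y(3) by simp
  then show False using assms(2,5) j by simp
qed

definition shell :: "nat \<Rightarrow> 'n set" where
  "shell k = {x \<in> reaching. 1 \<le> hops x \<and> hops x \<le> k}"

inductive weighted_path :: "'n \<Rightarrow> nat \<Rightarrow> real \<Rightarrow> bool" where
  base: "a \<in> S \<Longrightarrow> weighted_path a 0 1"
| step: "p \<le> T$a$b \<Longrightarrow> 0 < p \<Longrightarrow> weighted_path b r d \<Longrightarrow> weighted_path a (Suc r) (p * d)"

lemma weighted_path_exists:
  assumes "a \<in> reaching" "hops a = k"
  shows "\<exists>d. weighted_path a k d \<and> (1 / M) ^ card (N \<inter> \<phi> ` shell k) \<le> d"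
  using assms
proof (induction k arbitrary: a)
  case 0
  then have "a \<in> S" using hops_eq_0_iff by simp
  moreover have "shell 0 = {}" by (auto simp: shell_def)
  ultimately show ?case by (auto intro: weighted_path.base)
next
  case (Suc k)
  obtain b where b: "b \<in> reaching" "T$a$b > 0" "hops b = k" using hops_SucE[OF Suc.prems] by blast
  obtain d where d: "weighted_path b k d" "(1 / M) ^ card (N \<inter> \<phi> ` shell k) \<le> d"
    using Suc.IH[OF b(1) b(3)] by blast
  define p where "p = (if \<phi> a \<in> N then 1 / M else 1)"
  have p: "0 < p" "p \<le> T$a$b" using M_ge_1 entry_lower[OF b(2)] by (auto simp: p_def)
  let ?K = "card (N \<inter> \<phi> ` shell k)" and ?K' = "card (N \<inter> \<phi> ` shell (Suc k))"
  have sub: "N \<inter> \<phi> ` shell k \<subseteq> N \<inter> \<phi> ` shell (Suc k)" by (auto simp: shell_def)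
  have "(1 / M) ^ ?K' \<le> p * (1 / M) ^ ?K"
  proof (cases "\<phi> a \<in> N")
    case True
    have "\<phi> a \<notin> \<phi> ` shell k" using label_fresh[OF Suc.prems] by (auto simp: shell_def)
    moreover have "\<phi> a \<in> N \<inter> \<phi> ` shell (Suc k)" using True Suc.prems by (auto simp: shell_def)
    ultimately have "Suc ?K \<le> ?K'"
      using card_mono[of "N \<inter> \<phi> ` shell (Suc k)" "insert (\<phi> a) (N \<inter> \<phi> ` shell k)"] sub by auto
    then have "(1 / M) ^ ?K' \<le> (1 / M) ^ Suc ?K" by (rule power_decreasing) (use M_ge_1 in auto)
    then show ?thesis using True by (simp add: p_def)
  next
    case False
    have "?K \<le> ?K'" by (rule card_mono[OF _ sub]) simp
    then have "(1 / M) ^ ?K' \<le> (1 / M) ^ ?K" by (rule power_decreasing) (use M_ge_1 in auto)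
    then show ?thesis using False by (simp add: p_def)
  qed
  also have "\<dots> \<le> p * d" using d(2) p(1) by simp
  finally show ?case using weighted_path.step[OF p(2) p(1) d(1)] by (intro exI[of _ "p * d"]) simp
qed

lemma hops_le_card:
  assumes "a \<in> reaching"
  shows "hops a \<le> CARD('n) - 1"
proof -
  have level: "\<exists>x\<in>reaching. hops x = j" if "j \<le> hops a" for j
    using assms that
  proof (induction "hops a" arbitrary: a)
    case (Suc k)
    show ?case
    proof (cases "j = hops a")
      case False
      obtain b where "b \<in> reaching" "hops b = k" using hops_SucE[OF Suc.prems(1) Suc.hyps(2)[symmetric]] .
      then show ?thesis using Suc.hyps(1)[of b] Suc.prems(2) Suc.hyps(2) False by simp
    qed (use Suc.prems in blast)
  qed auto
  then obtain f where "\<And>j. j \<le> hops a \<Longrightarrow> f j \<in> reaching \<and> hops (f j) = j" by metis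
  then have "inj_on f {0..hops a}" by (metis atLeastAtMost_iff inj_onI)
  then have "card {0..hops a} \<le> CARD('n)" by (rule card_inj_on_le) auto
  then show ?thesis by simp
qed

lemma card_labels_shell:
  assumes "S \<noteq> {}"
  shows "card (N \<inter> \<phi> ` shell k) \<le> min (card N) (CARD('n) - 1)"
proof -
  have "shell k \<subseteq> UNIV - S" unfolding shell_def using hops_eq_0_iff by fastforce
  then have "card (shell k) \<le> CARD('n) - card S" by (metis card_Diff_subset card_mono finite subset_UNIV)
  moreover have "card S \<ge> 1" using assms by (simp add: Suc_le_eq card_gt_0_iff)
  moreover have "card (N \<inter> \<phi> ` shell k) \<le> card (\<phi> ` shell k)" by (rule card_mono) auto
  moreover have "card (\<phi> ` shell k) \<le> card (shell k)" by (rule card_image_le) simp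
  moreover have "card (N \<inter> \<phi> ` shell k) \<le> card N" by (rule card_mono) auto
  ultimately show ?thesis by linarith
qed

lemma weighted_path_bound:
  assumes "weighted_path a r \<delta>" "absorbing T E" "a \<in> E"
    and le_m: "\<And>l. l \<in> E \<Longrightarrow> v$l \<le> m"
    and le_s: "\<And>l. l \<in> S \<Longrightarrow> v$l \<le> s" and "s \<le> m"
    and sub: "\<And>j. j \<in> E \<Longrightarrow> v$j \<le> D + (T *v v)$j" and "0 \<le> D"
  shows "v$a \<le> r * D + \<delta> * s + (1 - \<delta>) * m \<and> 0 < \<delta> \<and> \<delta> \<le> 1"
  using assms(1,3)
proof (induction rule: weighted_path.induct)
  case (base a)
  then show ?case using le_s by simp
next
  case (step p a b r d)
  have "T$a$b > 0" using step(1,2) by linarith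
  then have "b \<in> E" using assms(2) step.prems unfolding absorbing_def by blast
  then have IH: "v$b \<le> r * D + d * s + (1 - d) * m" "0 < d" "d \<le> 1" using step.IH by auto
  have Tab: "T$a$b \<le> 1" by (rule stochastic_entry_le_1[OF T_stochastic])
  have "(T *v v)$a \<le> (T *v (\<chi> l. if l = b then v$b else m))$a"
  proof -
    have "T$a$l * v$l \<le> T$a$l * (if l = b then v$b else m)" for l
    proof (cases "T$a$l > 0")
      case True
      then have "l \<in> E" using assms(2) step.prems unfolding absorbing_def by blast
      then show ?thesis using True le_m by (auto intro: mult_left_mono)
    qed (use stochastic_nonneg[OF T_stochastic, of a l] in simp)
    then show ?thesis by (simp add: matrix_vector_mult_def sum_mono)
  qed
  also have "(T *v (\<chi> l. if l = b then v$b else m))$a = m + T$a$b * (v$b - m)"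
  proof -
    have "(\<Sum>l\<in>UNIV. T$a$l * (if l = b then v$b else m))
        = (\<Sum>l\<in>UNIV. T$a$l * m + (if l = b then T$a$b * (v$b - m) else 0))"
      by (rule sum.cong) (auto simp: algebra_simps)
    also have "\<dots> = m + T$a$b * (v$b - m)"
      using T_stochastic by (simp add: sum.distrib sum_distrib_right[symmetric] stochastic_def)
    finally show ?thesis by (simp add: matrix_vector_mult_def)
  qed
  finally have "(T *v v)$a \<le> m + T$a$b * (v$b - m)" .
  moreover have "T$a$b * (v$b - m) \<le> p * (v$b - m)"
    using step(1) le_m[OF \<open>b \<in> E\<close>] by (intro mult_right_mono_neg) auto
  moreover have "p * (v$b - m) \<le> p * (r * D + d * (s - m))"
    using IH(1) step(2) by (intro mult_left_mono) (auto simp: algebra_simps)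
  moreover have "p * (r * D) \<le> r * D" using Tab step(1,2) \<open>0 \<le> D\<close> by (intro mult_left_le_one_le) auto
  moreover have "v$a \<le> D + (T *v v)$a" using sub step.prems by blast
  ultimately have "v$a \<le> D + r * D + m + (p * d) * (s - m)" by (simp add: algebra_simps)
  moreover have "0 < p * d" "p * d \<le> 1" using Tab step(1,2) IH(2,3) by (auto simp: mult_le_one)
  ultimately show ?case by (simp add: algebra_simps)
qed

lemma reaching_if_reaches:
  assumes "(a, b) \<in> {(x, y). T$x$y > 0}\<^sup>*" "b \<in> S"
  shows "a \<in> reaching"
  using assms(1)
proof (induction rule: converse_rtrancl_induct)
  case base
  then show ?case using assms(2) reaching_reach_in[of b 0] by simp
next
  case (step x y)
  then show ?case using hops_edge[of y x] by simp
qed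

text \<open>A shortest path has weight at least \<open>M\<^sup>-\<^sup>K\<close>, since it visits at most \<open>K\<close> nondeterministic
  labels.\<close>
lemma max_gap:
  assumes E: "absorbing T E" "a \<in> E" and "a \<in> reaching" and "S \<noteq> {}"
    and le_a: "\<And>l. l \<in> E \<Longrightarrow> v$l \<le> v$a"
    and le_s: "\<And>l. l \<in> S \<Longrightarrow> v$l \<le> s"
    and sub: "\<And>j. j \<in> E \<Longrightarrow> v$j \<le> D + (T *v v)$j" and D: "0 \<le> D"
  shows "v$a - s \<le> real (CARD('n) - 1) * D * M ^ min (card N) (CARD('n) - 1)"
proof (cases "s \<le> v$a")
  case False
  have "0 \<le> real (CARD('n) - 1) * D * M ^ min (card N) (CARD('n) - 1)" using D M_ge_1 by simp
  then show ?thesis using False by linarith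
next
  case True
  let ?K = "min (card N) (CARD('n) - 1)"
  let ?r = "hops a"
  obtain d where d: "weighted_path a ?r d" "(1 / M) ^ card (N \<inter> \<phi> ` shell ?r) \<le> d"
    using weighted_path_exists[OF \<open>a \<in> reaching\<close> refl] by blast
  have "(1 / M) ^ ?K \<le> (1 / M) ^ card (N \<inter> \<phi> ` shell ?r)"
    by (rule power_decreasing[OF card_labels_shell[OF \<open>S \<noteq> {}\<close>]]) (use M_ge_1 in auto)
  then have "(1 / M) ^ ?K * M ^ ?K \<le> d * M ^ ?K" using d(2) M_ge_1 by (intro mult_right_mono) auto
  then have dM: "1 \<le> d * M ^ ?K" using M_ge_1 by (simp add: power_one_over)
  have "d * (v$a - s) \<le> ?r * D"
    using weighted_path_bound[OF d(1) E le_a le_s True sub D] by (simp add: algebra_simps)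
  have "v$a - s \<le> (d * M ^ ?K) * (v$a - s)" using dM True by (simp add: mult_le_cancel_right1)
  also have "\<dots> = M ^ ?K * (d * (v$a - s))" by (simp add: algebra_simps)
  also have "\<dots> \<le> M ^ ?K * (?r * D)" using \<open>d * (v$a - s) \<le> ?r * D\<close> M_ge_1 by (intro mult_left_mono) auto
  also have "\<dots> \<le> M ^ ?K * (real (CARD('n) - 1) * D)"
    using hops_le_card[OF \<open>a \<in> reaching\<close>] D M_ge_1
    by (intro mult_left_mono mult_right_mono) (simp_all only: of_nat_le_iff, simp_all)
  finally show ?thesis by (simp add: algebra_simps)
qed

end

context labelled_chain
begin

definition reach :: "'n \<Rightarrow> 'n set" where
  "reach a = {b. (a, b) \<in> {(x, y). T$x$y > 0}\<^sup>*}"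

lemma absorbing_reach: "absorbing T (reach a)"
  unfolding absorbing_def reach_def by (auto intro: rtrancl_into_rtrancl)

lemma reach_self: "a \<in> reach a"
  unfolding reach_def by simp

lemma reach_trans: "b \<in> reach a \<Longrightarrow> reach b \<subseteq> reach a"
  unfolding reach_def by (auto intro: rtrancl_trans)

text \<open>A reachable set of minimal cardinality is a closed communicating class.\<close>
lemma closed_class_exists: "\<exists>a0\<in>reach a. \<forall>l\<in>reach a0. reach l = reach a0"
proof -
  let ?X = "card ` reach ` reach a"
  obtain a0 where a0: "a0 \<in> reach a" "card (reach a0) = Min ?X"
    using Min_in[of ?X] reach_self by fastforce
  have "reach l = reach a0" if l: "l \<in> reach a0" for l
  proof -
    have sub: "reach l \<subseteq> reach a0" by (rule reach_trans[OF l])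
    have "l \<in> reach a" using reach_trans[OF a0(1)] l by blast
    then have "card (reach a0) \<le> card (reach l)" using a0(2) by simp
    moreover have "card (reach l) \<le> card (reach a0)" using sub by (simp add: card_mono)
    ultimately show ?thesis using sub by (intro card_subset_eq) auto
  qed
  with a0(1) show ?thesis by blast
qed

text \<open>The bound is obtained along two shortest paths: from a maximiser of \<open>u\<close> to a closed class,
  and inside that class from its maximiser to a state where \<open>u\<close> is nonpositive.\<close>
lemma subsolution_upper_bound:
  fixes u :: "real^'n"
  assumes sub: "\<And>j. u$j \<le> D + (T *v u)$j" and D: "0 \<le> D"
    and nonpos: "\<And>C. absorbing T C \<Longrightarrow> C \<noteq> {} \<Longrightarrow> \<exists>j\<in>C. u$j \<le> 0"
  shows "u$j \<le> 2 * (real (CARD('n) - 1) * D * M ^ min (card N) (CARD('n) - 1))"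
proof -
  let ?K = "real (CARD('n) - 1) * D * M ^ min (card N) (CARD('n) - 1)"
  obtain jm where jm: "Max (range (\<lambda>l. u$l)) = u$jm" using Max_range_attained by blast
  have jm_max: "u$l \<le> u$jm" for l unfolding jm[symmetric] by simp
  obtain a0 where a0: "a0 \<in> reach jm" "\<And>l. l \<in> reach a0 \<Longrightarrow> reach l = reach a0"
    using closed_class_exists by blast
  let ?C = "reach a0"
  have C: "absorbing T ?C" "?C \<noteq> {}" using absorbing_reach reach_self by blast+
  obtain j0 where j0: "j0 \<in> ?C" "u$j0 \<le> 0" using nonpos[OF C] by blast
  have "Max ((\<lambda>l. u$l) ` ?C) \<in> (\<lambda>l. u$l) ` ?C" by (rule Max_in) (use C(2) in auto)
  then obtain j1 where j1: "j1 \<in> ?C" "Max ((\<lambda>l. u$l) ` ?C) = u$j1" by auto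
  have j1_max: "u$l \<le> u$j1" if "l \<in> ?C" for l unfolding j1(2)[symmetric] using that by simp
  have "u$jm - u$j1 \<le> ?K"
  proof -
    interpret to_class: labelled_chain_target T \<phi> N M ?C ..
    have "jm \<in> to_class.reaching"
      using a0(1) reach_self[of a0] by (intro to_class.reaching_if_reaches) (auto simp: reach_def)
    then show ?thesis
      using to_class.max_gap[of UNIV jm u "u$j1" D] C(2) j1_max jm_max sub D
      by (auto simp: absorbing_def)
  qed
  moreover have "u$j1 - u$j0 \<le> ?K"
  proof -
    interpret to_state: labelled_chain_target T \<phi> N M "{j0}" ..
    have "j0 \<in> reach j1" using a0(2)[OF j1(1)] j0(1) reach_self by blast
    then have "j1 \<in> to_state.reaching" by (intro to_state.reaching_if_reaches) (auto simp: reach_def)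
    then show ?thesis using to_state.max_gap[OF C(1) j1(1)] j1_max sub D by simp
  qed
  ultimately show ?thesis using j0(2) jm_max[of j] by linarith
qed

end

context shapley_game
begin

lemma policy_matrix_labelled_chain:
  assumes "M \<ge> 1" and lower: "\<And>h l. P$h$l > 0 \<Longrightarrow> (if h \<in> N then 1 / M else 1) \<le> P$h$l"
  shows "labelled_chain (policy_matrix \<tau>) \<tau> N M"
  using assms policy_matrix_stochastic by unfold_locales (auto simp: policy_matrix_def)

end

context blackwell_game
begin

lemma R_F_le_hnorm_vstar: "R_F F \<le> hnorm vstar"
  unfolding R_F_def ergodic_const_eq
proof (rule cInf_lower)
  show "hnorm vstar \<in> hnorm ` {u. F u = (\<chi> i. \<rho> + u $ i)}" using vstar_is_bias by blast
  show "bdd_below (hnorm ` {u. F u = (\<chi> i. \<rho> + u $ i)})"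
    by (rule bdd_belowI[of _ 0]) (auto simp: hnorm_nonneg)
qed

text \<open>Both \<open>vstar\<close> and \<open>-vstar\<close> are subsolutions with defect \<open>2 W\<close> for the chain \<open>T0\<close>.\<close>
lemma hnorm_vstar_le:
  assumes "labelled_chain T0 \<tau>0 N M"
  shows "hnorm vstar \<le> 8 * real (CARD('n) - 1) * W * M ^ min (card N) (CARD('n) - 1)"
proof -
  interpret labelled_chain T0 \<tau>0 N M by (fact assms)
  let ?K = "real (CARD('n) - 1) * (2 * W) * M ^ min (card N) (CARD('n) - 1)"
  have W: "0 \<le> 2 * W" using bias_const_bound[OF bias] by simp
  have eq: "vstar $ j = (c0 $ j - \<rho>) + (T0 *v vstar) $ j" for j
    using arg_cong[where f = "\<lambda>x. x $ j", OF vstar_policy_eq] by simp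
  have up: "vstar $ j \<le> 2 * ?K" for j
  proof (rule subsolution_upper_bound[OF _ W])
    show "vstar $ j \<le> 2 * W + (T0 *v vstar) $ j" for j using eq[of j] c0_bound[of j] by linarith
    show "\<exists>j\<in>C. vstar $ j \<le> 0" if "absorbing T0 C" "C \<noteq> {}" for C
      using vstar_sign_on_absorbing[of 1, OF _ that] by simp
  qed
  have lo: "(- vstar) $ j \<le> 2 * ?K" for j
  proof (rule subsolution_upper_bound[OF _ W])
    show "(- vstar) $ j \<le> 2 * W + (T0 *v (- vstar)) $ j" for j
      using eq[of j] c0_bound[of j] by (simp add: matrix_vector_mult_def sum_negf)
    show "\<exists>j\<in>C. (- vstar) $ j \<le> 0" if "absorbing T0 C" "C \<noteq> {}" for C
      using vstar_sign_on_absorbing[of "-1", OF _ that] by simp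
  qed
  obtain j1 where j1: "Max (range (\<lambda>i. vstar$i)) = vstar $ j1" using Max_range_attained by blast
  obtain j0 where j0: "Min (range (\<lambda>i. vstar$i)) = vstar $ j0" using Min_range_attained by blast
  have "hnorm vstar \<le> 4 * ?K" using up[of j1] lo[of j0] unfolding hnorm_def j0 j1 by simp
  then show ?thesis by (simp add: algebra_simps)
qed

end

section \<open>The tropical Shapley operator\<close>

lemma Max_range_ereal_restrict:
  fixes f :: "'a::finite \<Rightarrow> ereal"
  assumes "S \<noteq> {}" "\<And>h. h \<notin> S \<Longrightarrow> f h = -\<infinity>" "\<And>h. h \<in> S \<Longrightarrow> f h = ereal (g h)"
  shows "Max (range f) = ereal (Max (g ` S))"
proof (rule Max_eqI)
  fix y assume "y \<in> range f"
  then obtain h where h: "y = f h" by blast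
  show "y \<le> ereal (Max (g ` S))"
    using h assms(2,3)[of h] Max_ge[of "g ` S" "g h"] by (cases "h \<in> S") auto
next
  have "Max (g ` S) \<in> g ` S" by (rule Max_in) (use assms(1) in auto)
  then obtain h where "h \<in> S" "Max (g ` S) = g h" by auto
  then show "ereal (Max (g ` S)) \<in> range f" using assms(3) by (metis rangeI)
qed simp

lemma Min_range_ereal_restrict:
  fixes f :: "'a::finite \<Rightarrow> ereal"
  assumes "S \<noteq> {}" "\<And>h. h \<notin> S \<Longrightarrow> f h = \<infinity>" "\<And>h. h \<in> S \<Longrightarrow> f h = ereal (g h)"
  shows "Min (range f) = ereal (Min (g ` S))"
proof (rule Min_eqI)
  fix y assume "y \<in> range f"
  then obtain h where h: "y = f h" by blast
  show "ereal (Min (g ` S)) \<le> y"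
    using h assms(2,3)[of h] Min_le[of "g ` S" "g h"] by (cases "h \<in> S") auto
next
  have "Min (g ` S) \<in> g ` S" by (rule Min_in) (use assms(1) in auto)
  then obtain h where "h \<in> S" "Min (g ` S) = g h" by auto
  then show "ereal (Min (g ` S)) \<in> range f" using assms(3) by (metis rangeI)
qed simp

text \<open>Player Min picks a row \<open>i\<close> with \<open>A i j\<close> finite, player Max a column \<open>h\<close> with \<open>B i h\<close> finite;
  the infinite entries are exactly the ones ignored by the tropical \<open>max\<close> and \<open>min\<close>.\<close>
lemma shapley_eq_minmax_op:
  fixes A :: "ereal^'n::finite^'m::finite" and B :: "ereal^'q::finite^'m"
  assumes "\<forall>i j. A$i$j \<noteq> \<infinity>" "\<forall>i h. B$i$h \<noteq> \<infinity>"
    and "\<forall>j. \<exists>i. A$i$j \<noteq> -\<infinity>" "\<forall>i. \<exists>h. B$i$h \<noteq> -\<infinity>"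
  shows "shapley A B P = minmax_op (\<lambda>j. {i. A$i$j \<noteq> -\<infinity>}) (\<lambda>i. {h. B$i$h \<noteq> -\<infinity>})
           (\<lambda>i j h. real_of_ereal (B$i$h) - real_of_ereal (A$i$j)) P"
proof (rule ext)
  fix x
  have finite_add: "a \<noteq> \<infinity> \<Longrightarrow> a \<noteq> -\<infinity> \<Longrightarrow> a + ereal t = ereal (real_of_ereal a + t)"
    and finite_neg_add: "a \<noteq> \<infinity> \<Longrightarrow> a \<noteq> -\<infinity> \<Longrightarrow> - a + ereal t = ereal (- real_of_ereal a + t)"
    for a t by (cases a; simp)+
  let ?Y = "\<lambda>i. Max ((\<lambda>h. real_of_ereal (B$i$h) + (P *v x)$h) ` {h. B$i$h \<noteq> -\<infinity>})"
  have Y: "trop_mul B (P *v x) $ i = ereal (?Y i)" for i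
    unfolding trop_mul_def vec_lambda_beta
    by (rule Max_range_ereal_restrict) (use assms(2,4) in \<open>auto simp: finite_add\<close>)
  have Z: "trop_sharp A (trop_mul B (P *v x)) $ j
           = ereal (Min ((\<lambda>i. - real_of_ereal (A$i$j) + ?Y i) ` {i. A$i$j \<noteq> -\<infinity>}))" for j
    unfolding trop_sharp_def vec_lambda_beta Y
    by (rule Min_range_ereal_restrict) (use assms(1,3) in \<open>auto simp: finite_neg_add\<close>)
  have "Max ((\<lambda>h. (real_of_ereal (B$i$h) - real_of_ereal (A$i$j)) + (P *v x)$h) ` {h. B$i$h \<noteq> -\<infinity>})
        = - real_of_ereal (A$i$j) + ?Y i" for i j
    using Max_add_commute[of "{h. B$i$h \<noteq> -\<infinity>}" "\<lambda>h. real_of_ereal (B$i$h) + (P *v x)$h"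
        "- real_of_ereal (A$i$j)"] assms(4)
    by (simp add: algebra_simps)
  then show "shapley A B P x = minmax_op (\<lambda>j. {i. A$i$j \<noteq> -\<infinity>}) (\<lambda>i. {h. B$i$h \<noteq> -\<infinity>})
               (\<lambda>i j h. real_of_ereal (B$i$h) - real_of_ereal (A$i$j)) P x"
    unfolding shapley_def minmax_op_def by (simp add: Z vec_eq_iff)
qed

lemma abs_le_W_param:
  assumes "A$i$j \<noteq> -\<infinity>" "B$i$h \<noteq> -\<infinity>"
  shows "\<bar>real_of_ereal (B$i$h) - real_of_ereal (A$i$j)\<bar> \<le> W_param A B"
proof -
  let ?d = "\<lambda>(i, j, h). \<bar>real_of_ereal (A$i$j) - real_of_ereal (B$i$h)\<bar>"
  have "{\<bar>real_of_ereal (A$i$j) - real_of_ereal (B$i$h)\<bar> | i j h. A$i$j \<noteq> -\<infinity> \<and> B$i$h \<noteq> -\<infinity>}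
        \<subseteq> range ?d"
  proof
    fix y assume "y \<in> {\<bar>real_of_ereal (A$i$j) - real_of_ereal (B$i$h)\<bar> | i j h.
                           A$i$j \<noteq> -\<infinity> \<and> B$i$h \<noteq> -\<infinity>}"
    then obtain i j h where "y = ?d (i, j, h)" by auto
    then show "y \<in> range ?d" by blast
  qed
  then have "finite {\<bar>real_of_ereal (A$i$j) - real_of_ereal (B$i$h)\<bar> | i j h.
                       A$i$j \<noteq> -\<infinity> \<and> B$i$h \<noteq> -\<infinity>}"
    by (rule finite_subset) simp
  then show ?thesis
    unfolding W_param_def using assms by (subst abs_minus_commute) (rule Max_ge, auto)
qed

lemma rational_stochastic_entry_lower:
  fixes P :: "real^'n::finite^'q" and Q :: "int^'n^'q"
  assumes P: "stochastic P" and "M > 0" and P_rat: "\<forall>i l. P$i$l = real_of_int (Q$i$l) / real M"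
    and pos: "P$h$l > 0"
  shows "(if h \<in> nondet_states P then 1 / real M else 1) \<le> P$h$l"
proof (cases "h \<in> nondet_states P")
  case True
  have "Q$h$l > 0" using pos P_rat \<open>M > 0\<close> by (simp add: zero_less_divide_iff)
  then have "1 / real M \<le> real_of_int (Q$h$l) / real M" using \<open>M > 0\<close> by (simp add: divide_right_mono)
  then show ?thesis using True P_rat by simp
next
  case False
  have "P$h$l' = 0" if "l' \<noteq> l" for l'
    using False pos that stochastic_nonneg[OF P, of h l'] unfolding nondet_states_def by force
  then have "(\<Sum>l'\<in>UNIV. P$h$l') = P$h$l" by (simp add: sum.remove[of UNIV l])
  then show ?thesis using False P by (simp add: stochastic_def)
qed

lemma eight_mul_pred_le_ten_mul_square: "(1::real) \<le> n \<Longrightarrow> 8 * (n - 1) \<le> 10 * n^2"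
  using power_increasing[of 1 2 n] by simp

theorem mainTheorem10:
  fixes A :: "ereal^'n^'m" and B :: "ereal^'q^'m" and P :: "real^'n^'q"
    and Q :: "int^'n^'q" and M :: nat
  assumes A_trop: "\<forall>i j. A$i$j \<noteq> \<infinity>"
    and B_trop: "\<forall>i h. B$i$h \<noteq> \<infinity>"
    and A_col: "\<forall>j. \<exists>i. A$i$j \<noteq> -\<infinity>"
    and B_row: "\<forall>i. \<exists>h. B$i$h \<noteq> -\<infinity>"
    and A_int: "\<forall>i j. A$i$j \<noteq> -\<infinity> \<longrightarrow> (\<exists>z::int. A$i$j = ereal (of_int z))"
    and B_int: "\<forall>i h. B$i$h \<noteq> -\<infinity> \<longrightarrow> (\<exists>z::int. B$i$h = ereal (of_int z))"
    and P_nonneg: "\<forall>i l. P$i$l \<ge> 0"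
    and P_stoch: "\<forall>i. (\<Sum>l\<in>UNIV. P$i$l) = 1"
    and M_pos: "M > 0"
    and P_rat: "\<forall>i l. P$i$l = real_of_int (Q$i$l) / real M"
    and has_bias: "\<exists>v. is_bias (shapley A B P) v"
  shows "R_F (shapley A B P) \<le> hnorm (blackwell_bias (shapley A B P))
       \<and> hnorm (blackwell_bias (shapley A B P))
           \<le> 10 * real (CARD('n))^2 * W_param A B
              * real M ^ min (card (nondet_states P)) (CARD('n) - 1)"
proof -
  define Is where "Is = (\<lambda>j. {i. A$i$j \<noteq> -\<infinity>})"
  define Hs where "Hs = (\<lambda>i. {h. B$i$h \<noteq> -\<infinity>})"
  define c where "c = (\<lambda>i j h. real_of_ereal (B$i$h) - real_of_ereal (A$i$j))"
  let ?K = "real M ^ min (card (nondet_states P)) (CARD('n) - 1)"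
  have F: "shapley A B P = minmax_op Is Hs c P"
    unfolding Is_def Hs_def c_def using A_trop B_trop A_col B_row by (rule shapley_eq_minmax_op)
  have P: "stochastic P" using P_nonneg P_stoch by (simp add: stochastic_def)
  interpret shapley_game Is Hs c P "W_param A B"
    using A_col B_row P abs_le_W_param by unfold_locales (auto simp: Is_def Hs_def c_def)
  obtain v0 \<rho> where "F v0 = (\<chi> i. \<rho> + v0$i)" using has_bias unfolding is_bias_def F by blast
  moreover obtain \<sigma>0 \<tau>0 where "is_policy \<sigma>0 \<tau>0" "\<forall>\<^sub>F \<alpha> in at_left 1. disc_value F \<alpha> = policy_value \<sigma>0 \<tau>0 \<alpha>"
    using blackwell_policy_exists by blast
  ultimately interpret blackwell_game Is Hs c P "W_param A B" v0 \<rho> \<sigma>0 \<tau>0 by unfold_locales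
  have "labelled_chain T0 \<tau>0 (nondet_states P) (real M)"
    using M_pos rational_stochastic_entry_lower[OF P M_pos P_rat] by (intro policy_matrix_labelled_chain) auto
  then have "hnorm vstar \<le> 8 * (real CARD('n) - 1) * (W_param A B * ?K)"
    using hnorm_vstar_le by (simp add: of_nat_diff mult.assoc)
  also have "\<dots> \<le> 10 * real CARD('n)^2 * (W_param A B * ?K)"
    using bias_const_bound[OF bias] eight_mul_pred_le_ten_mul_square[of "real CARD('n)"]
    by (intro mult_right_mono) auto
  finally show ?thesis using R_F_le_hnorm_vstar unfolding F by (simp add: mult.assoc)
qed

end
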